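(* Let $G$ be a finite nilpotent group, $f\in\mathrm{Aut}(G)$, and for each prime $p$ dividing $|G|$ let $S_p$ be the (unique) Sylow $p$-subgroup of $G$. Suppose $Q=\mathcal{Q}(G,f)$ is connected. Then $Q$ is simply connected if and only if $\mathcal{Q}(S_p,f|_{S_p})$ is simply connected for every prime $p$ dividing $|G|$.
   Context: A quandle is a set $Q$ with a binary operation $*$ such that every left translation $L_x:y\mapsto x*y$ is bijective, $x*(y*z)=(x*y)*(x*z)$ and $x*x=x$; $Q$ is connected if $\langle L_x:x\in Q\rangle$ is transitive on $Q$. For a group $G$ and $f\in\mathrm{Aut}(G)$, $\mathcal{Q}(G,f)$ is $G$ with $x*y=xf(x^{-1}y)$ (note $f(S_p)=S_p$). For a set $S$, a quandle cocycle with values in $\mathrm{Sym}_S$ is $\theta:Q\times Q\to\mathrm{Sym}_S$ with $\theta_{x*y,x*z}\theta_{x,z}=\theta_{x,y*z}\theta_{y,z}$ and $\theta_{x,x}=1$; it is cohomologous to the trivial cocycle if there is $\gamma:Q\to\mathrm{Sym}_S$ with $\theta_{x,y}=\gamma_{x*y}\gamma_y^{-1}$ for all $x,y$. $Q$ is simply connected if it is connected and, for every set $S$, every such cocycle is cohomologous to the trivial cocycle. *)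

theory Defs
  imports "HOL-Algebra.Algebra" "HOL-Computational_Algebra.Primes"
begin

definition quandle :: "'a set \<Rightarrow> ('a \<Rightarrow> 'a \<Rightarrow> 'a) \<Rightarrow> bool" where
  "quandle Q op \<longleftrightarrow>
     (\<forall>x\<in>Q. \<forall>y\<in>Q. op x y \<in> Q) \<and>
     (\<forall>x\<in>Q. bij_betw (op x) Q Q) \<and>
     (\<forall>x\<in>Q. \<forall>y\<in>Q. \<forall>z\<in>Q. op x (op y z) = op (op x y) (op x z)) \<and>
     (\<forall>x\<in>Q. op x x = x)"

text \<open>Elements of the group generated by the left translations L_x (as maps, to be
  evaluated on Q): finite words in the L_x and their inverses.\<close>
inductive_set inn_gen :: "'a set \<Rightarrow> ('a \<Rightarrow> 'a \<Rightarrow> 'a) \<Rightarrow> ('a \<Rightarrow> 'a) set"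
  for Q op where
  id_in: "id \<in> inn_gen Q op"
| L_in: "g \<in> inn_gen Q op \<Longrightarrow> x \<in> Q \<Longrightarrow> op x \<circ> g \<in> inn_gen Q op"
| Linv_in: "g \<in> inn_gen Q op \<Longrightarrow> x \<in> Q \<Longrightarrow> inv_into Q (op x) \<circ> g \<in> inn_gen Q op"

definition quandle_connected :: "'a set \<Rightarrow> ('a \<Rightarrow> 'a \<Rightarrow> 'a) \<Rightarrow> bool" where
  "quandle_connected Q op \<longleftrightarrow> quandle Q op \<and>
     (\<forall>y\<in>Q. \<forall>z\<in>Q. \<exists>g\<in>inn_gen Q op. g y = z)"

text \<open>Quandle cocycles with values in Sym_S (permutations of S, compared on S;
  the product in Sym_S is composition of maps).\<close>
definition quandle_cocycle ::
  "'a set \<Rightarrow> ('a \<Rightarrow> 'a \<Rightarrow> 'a) \<Rightarrow> 's set \<Rightarrow> ('a \<Rightarrow> 'a \<Rightarrow> 's \<Rightarrow> 's) \<Rightarrow> bool" where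
  "quandle_cocycle Q op S \<theta> \<longleftrightarrow>
     (\<forall>x\<in>Q. \<forall>y\<in>Q. bij_betw (\<theta> x y) S S) \<and>
     (\<forall>x\<in>Q. \<forall>y\<in>Q. \<forall>z\<in>Q. \<forall>s\<in>S.
        \<theta> (op x y) (op x z) (\<theta> x z s) = \<theta> x (op y z) (\<theta> y z s)) \<and>
     (\<forall>x\<in>Q. \<forall>s\<in>S. \<theta> x x s = s)"

definition cohomologous_trivial ::
  "'a set \<Rightarrow> ('a \<Rightarrow> 'a \<Rightarrow> 'a) \<Rightarrow> 's set \<Rightarrow> ('a \<Rightarrow> 'a \<Rightarrow> 's \<Rightarrow> 's) \<Rightarrow> bool" where
  "cohomologous_trivial Q op S \<theta> \<longleftrightarrow>
     (\<exists>\<gamma>. (\<forall>x\<in>Q. bij_betw (\<gamma> x) S S) \<and>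
          (\<forall>x\<in>Q. \<forall>y\<in>Q. \<forall>s\<in>S. \<theta> x y s = \<gamma> (op x y) (inv_into S (\<gamma> y) s)))"

text \<open>Simple connectedness, with the coefficient sets S ranging over all subsets of the
  type 's (the type is passed explicitly).\<close>
definition simply_connected ::
  "'a set \<Rightarrow> ('a \<Rightarrow> 'a \<Rightarrow> 'a) \<Rightarrow> 's itself \<Rightarrow> bool" where
  "simply_connected Q op (T :: 's itself) \<longleftrightarrow> quandle_connected Q op \<and>
     (\<forall>(S :: 's set) \<theta>. quandle_cocycle Q op S \<theta> \<longrightarrow> cohomologous_trivial Q op S \<theta>)"

definition qop :: "('a, 'b) monoid_scheme \<Rightarrow> ('a \<Rightarrow> 'a) \<Rightarrow> 'a \<Rightarrow> 'a \<Rightarrow> 'a" where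
  "qop G f x y = x \<otimes>\<^bsub>G\<^esub> f (inv\<^bsub>G\<^esub> x \<otimes>\<^bsub>G\<^esub> y)"

fun lower_central :: "('a, 'b) monoid_scheme \<Rightarrow> nat \<Rightarrow> 'a set" where
  "lower_central G 0 = carrier G"
| "lower_central G (Suc n) = generate G
     (\<Union>h\<in>carrier G. \<Union>k\<in>lower_central G n.
        {h \<otimes>\<^bsub>G\<^esub> k \<otimes>\<^bsub>G\<^esub> inv\<^bsub>G\<^esub> h \<otimes>\<^bsub>G\<^esub> inv\<^bsub>G\<^esub> k})"

definition nilpotent_group :: "('a, 'b) monoid_scheme \<Rightarrow> bool" where
  "nilpotent_group G \<longleftrightarrow> group G \<and> (\<exists>n. lower_central G n = {\<one>\<^bsub>G\<^esub>})"

definition sylow_subgroup :: "('a, 'b) monoid_scheme \<Rightarrow> nat \<Rightarrow> 'a set \<Rightarrow> bool" where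
  "sylow_subgroup G p P \<longleftrightarrow> subgroup P G \<and> card P = p ^ multiplicity p (order G)"

end

theory Submission
  imports Defs
begin

text \<open>
  A finite nilpotent group \<open>G\<close> is the direct product of its Sylow subgroups \<open>S\<^sub>p\<close>, and
  \<open>x \<mapsto> x\<^sup>e\<close>, for an exponent \<open>e\<close> that is \<open>1\<close> modulo \<open>|S\<^sub>p|\<close> and \<open>0\<close> modulo
  \<open>|G| / |S\<^sub>p|\<close>, is an endomorphism of \<open>G\<close> onto \<open>S\<^sub>p\<close> that commutes with \<open>f\<close>. It is
  therefore a quandle retraction of \<open>Q(G,f)\<close> onto \<open>Q(S\<^sub>p,f)\<close>, and retractions preserve
  connectedness and simple connectedness.

  Conversely, a cocycle \<open>\<theta>\<close> on \<open>Q = Q(G,f)\<close> gives the permutations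
  \<open>L\<^sub>x (y, t) = (x * y, \<theta>\<^sub>x\<^sub>,\<^sub>y t)\<close> of \<open>Q \<times> S\<close>, and since \<open>Q\<close> is connected, \<open>\<theta>\<close> is a
  coboundary as soon as every element of the group they generate that fixes \<open>1 \<in> Q\<close> also
  fixes the fibre over \<open>1\<close>. The differences \<open>L\<^sub>x L\<^sub>y\<^sup>-\<^sup>1\<close> with \<open>x\<^sup>-\<^sup>1 y \<in> S\<^sub>p\<close> generate
  a subgroup \<open>D\<^sub>p\<close> acting on \<open>Q\<close> by left translations by elements of \<open>S\<^sub>p\<close>. For \<open>p \<noteq> q\<close>
  a commutator of elements of \<open>D\<^sub>p\<close> and \<open>D\<^sub>q\<close> acts trivially on \<open>Q\<close>, hence is central, and
  is killed by both \<open>|S\<^sub>p|\<close> and \<open>|S\<^sub>q|\<close>; so \<open>D\<^sub>p\<close> and \<open>D\<^sub>q\<close> commute. The \<open>D\<^sub>p\<close> are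
  normalised by \<open>L\<^sub>1\<close>, and together with \<open>L\<^sub>1\<close> they generate the whole group. When
  \<open>Q(S\<^sub>p,f)\<close> is connected, \<open>D\<^sub>p\<close> lies in the group generated by the \<open>L\<^sub>a\<close> with
  \<open>a \<in> S\<^sub>p\<close>, which acts on \<open>S\<^sub>p \<times> S\<close> through a trivialisation of \<open>\<theta>\<close> on \<open>S\<^sub>p\<close>, so
  its elements fixing \<open>1\<close> fix the fibre. An induction over the primes dividing \<open>|G|\<close>
  concludes.
\<close>

section \<open>Group-theoretic preliminaries\<close>

lemma (in group) inv_mult_cancel_left [simp]:
  "x \<in> carrier G \<Longrightarrow> y \<in> carrier G \<Longrightarrow> inv x \<otimes> (x \<otimes> y) = y"
  by (simp add: m_assoc [symmetric])

lemma (in group) mult_inv_cancel_left [simp]: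
  "x \<in> carrier G \<Longrightarrow> y \<in> carrier G \<Longrightarrow> x \<otimes> (inv x \<otimes> y) = y"
  by (simp add: m_assoc [symmetric])

lemma (in group) subgroup_nat_pow_closed:
  assumes "subgroup H G" "h \<in> H"
  shows "h [^] (n::nat) \<in> H"
  using subgroup_int_pow_closed[OF assms, of "int n"] by (simp add: int_pow_int)

lemma (in group) pow_eq_one_coprime:
  assumes "x \<in> carrier G" "x [^] (a::nat) = \<one>" "x [^] (b::nat) = \<one>" "coprime a b"
  shows "x = \<one>"
proof -
  have "ord x dvd a" "ord x dvd b" using assms pow_eq_id by auto
  then have "ord x dvd 1" using assms(4) by (meson coprime_common_divisor coprime_imp_gcd_eq_1 gcd_greatest)
  then have "x [^] (1::nat) = \<one>" using assms(1) pow_eq_id by blast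
  then show ?thesis using assms(1) by simp
qed

lemma (in group) pow_one_plus_mult:
  assumes "x \<in> carrier G" "x [^] (N::nat) = \<one>"
  shows "x [^] (1 + N * v) = x"
proof -
  have "x [^] (N * v) = \<one>" using assms by (metis nat_pow_one nat_pow_pow)
  then show ?thesis using assms by (simp add: nat_pow_mult [symmetric])
qed

lemma (in group) pow_eq_one_if_order_dvd:
  assumes "x \<in> carrier G" "order G dvd N"
  shows "x [^] N = \<one>"
  using assms pow_order_eq_1 by (metis dvdE nat_pow_one nat_pow_pow)

lemma (in group) subgroup_pow_card_eq_one:
  assumes "subgroup H G" "finite H" "x \<in> H"
  shows "x [^] card H = \<one>"
proof -
  interpret K: group "G\<lparr>carrier := H\<rparr>" using assms subgroup_imp_group by blast
  have "x [^]\<^bsub>G\<lparr>carrier := H\<rparr>\<^esub> order (G\<lparr>carrier := H\<rparr>) = \<one>\<^bsub>G\<lparr>carrier := H\<rparr>\<^esub>"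
    using K.pow_order_eq_1 assms by simp
  then show ?thesis by (simp add: order_def nat_pow_consistent [symmetric])
qed

lemma (in group) conj_nat_pow:
  assumes "g \<in> carrier G" "x \<in> carrier G"
  shows "(g \<otimes> x \<otimes> inv g) [^] (n::nat) = g \<otimes> x [^] n \<otimes> inv g"
proof (induct n)
  case 0 then show ?case using assms by simp
next
  case (Suc n)
  have "(g \<otimes> x \<otimes> inv g) [^] Suc n = (g \<otimes> x [^] n \<otimes> inv g) \<otimes> (g \<otimes> x \<otimes> inv g)"
    using Suc by simp
  also have "\<dots> = g \<otimes> x [^] Suc n \<otimes> inv g" using assms by (simp add: m_assoc)
  finally show ?case .
qed

lemma (in group) commute_nat_pow:
  assumes "a \<in> carrier G" "c \<in> carrier G" "c \<otimes> a = a \<otimes> c"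
  shows "c \<otimes> a [^] (n::nat) = a [^] n \<otimes> c"
proof (induct n)
  case 0 then show ?case using assms by simp
next
  case (Suc n)
  have "c \<otimes> a [^] Suc n = (c \<otimes> a [^] n) \<otimes> a" using assms by (simp add: m_assoc)
  also have "\<dots> = a [^] n \<otimes> (c \<otimes> a)" using Suc assms by (simp add: m_assoc)
  also have "\<dots> = a [^] Suc n \<otimes> c" using assms by (simp add: m_assoc)
  finally show ?case .
qed

lemma (in group) commute_inv:
  assumes "a \<in> carrier G" "x \<in> carrier G" "a \<otimes> x = x \<otimes> a"
  shows "a \<otimes> inv x = inv x \<otimes> a"
proof -
  have "inv x \<otimes> (a \<otimes> x) \<otimes> inv x = inv x \<otimes> (x \<otimes> a) \<otimes> inv x" by (simp only: assms(3))
  then show ?thesis using assms(1,2) by (simp add: m_assoc)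
qed

lemma (in group) commute_generate:
  assumes a: "a \<in> carrier G" and A: "A \<subseteq> carrier G" and comm: "\<forall>x\<in>A. a \<otimes> x = x \<otimes> a"
    and g: "g \<in> generate G A"
  shows "a \<otimes> g = g \<otimes> a"
  using g
proof (induct g rule: generate.induct)
  case one then show ?case using a by simp
next
  case (incl h) then show ?case using comm by blast
next
  case (inv h) then show ?case using commute_inv[OF a] comm A by blast
next
  case (eng h1 h2)
  have h: "h1 \<in> carrier G" "h2 \<in> carrier G" using eng generate_in_carrier[OF A] by auto
  have "a \<otimes> (h1 \<otimes> h2) = (a \<otimes> h1) \<otimes> h2" using a h by (simp add: m_assoc)
  also have "\<dots> = h1 \<otimes> (a \<otimes> h2)" using eng a h by (simp add: m_assoc)
  also have "\<dots> = (h1 \<otimes> h2) \<otimes> a" using eng a h by (simp add: m_assoc)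
  finally show ?case .
qed

lemma (in group) conj_generate:
  assumes g: "g \<in> carrier G" and A: "A \<subseteq> carrier G"
    and conj: "\<forall>x\<in>A. g \<otimes> x \<otimes> inv g \<in> generate G A" and h: "h \<in> generate G A"
  shows "g \<otimes> h \<otimes> inv g \<in> generate G A"
  using h
proof (induct h rule: generate.induct)
  case one then show ?case using g generate.one by simp
next
  case (incl h) then show ?case using conj by blast
next
  case (inv h)
  have "g \<otimes> inv h \<otimes> inv g = inv (g \<otimes> h \<otimes> inv g)"
    using g inv A by (auto simp: inv_mult_group m_assoc)
  then show ?case using conj inv generate_m_inv_closed[OF A] by simp
next
  case (eng h1 h2)
  have h: "h1 \<in> carrier G" "h2 \<in> carrier G" using eng generate_in_carrier[OF A] by auto
  have "g \<otimes> (h1 \<otimes> h2) \<otimes> inv g = (g \<otimes> h1 \<otimes> inv g) \<otimes> (g \<otimes> h2 \<otimes> inv g)"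
    using g h by (simp add: m_assoc)
  then show ?case using eng generate.eng by simp
qed

definition (in group) conj_normalizer :: "'a set \<Rightarrow> 'a set" where
  "conj_normalizer H = {g \<in> carrier G. \<forall>h\<in>H. g \<otimes> h \<otimes> inv g \<in> H \<and> inv g \<otimes> h \<otimes> g \<in> H}"

lemma (in group) subgroup_conj_normalizer:
  assumes H: "H \<subseteq> carrier G"
  shows "subgroup (conj_normalizer H) G"
proof (rule subgroupI)
  show "conj_normalizer H \<subseteq> carrier G" by (auto simp: conj_normalizer_def)
  have "\<one> \<in> conj_normalizer H" using subsetD[OF H] by (simp add: conj_normalizer_def)
  then show "conj_normalizer H \<noteq> {}" by blast
next
  fix g assume "g \<in> conj_normalizer H"
  then show "inv g \<in> conj_normalizer H" by (auto simp: conj_normalizer_def)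
next
  fix g1 g2 assume g: "g1 \<in> conj_normalizer H" "g2 \<in> conj_normalizer H"
  then have gc: "g1 \<in> carrier G" "g2 \<in> carrier G" by (auto simp: conj_normalizer_def)
  have "(g1 \<otimes> g2) \<otimes> h \<otimes> inv (g1 \<otimes> g2) = g1 \<otimes> (g2 \<otimes> h \<otimes> inv g2) \<otimes> inv g1"
    "inv (g1 \<otimes> g2) \<otimes> h \<otimes> (g1 \<otimes> g2) = inv g2 \<otimes> (inv g1 \<otimes> h \<otimes> g1) \<otimes> g2" if "h \<in> H" for h
    using gc H that by (auto simp: m_assoc inv_mult_group)
  then show "g1 \<otimes> g2 \<in> conj_normalizer H" using g gc by (auto simp: conj_normalizer_def)
qed

lemma (in group) subgroup_subset_conj_normalizer: "subgroup H G \<Longrightarrow> H \<subseteq> conj_normalizer H"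
  using subgroup.mem_carrier subgroup.m_closed subgroup.m_inv_closed by (fastforce simp: conj_normalizer_def)

lemma (in group) normal_in_conj_normalizer:
  assumes H: "subgroup H G"
  shows "H \<lhd> G\<lparr>carrier := conj_normalizer H\<rparr>"
proof -
  have N: "subgroup (conj_normalizer H) G" using subgroup_conj_normalizer[OF subgroup.subset[OF H]] .
  interpret N: group "G\<lparr>carrier := conj_normalizer H\<rparr>" using subgroup_imp_group[OF N] .
  show ?thesis
    using subgroup_incl[OF H N subgroup_subset_conj_normalizer[OF H]] N
    by (subst N.normal_inv_iff) (auto simp: conj_normalizer_def)
qed

lemma (in group) generate_union_normalized_decomp:
  assumes H: "subgroup H G" and Y: "Y \<subseteq> conj_normalizer H"
    and \<phi>: "\<phi> \<in> generate G (H \<union> Y)"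
  shows "\<exists>h\<in>H. \<exists>k\<in>generate G Y. \<phi> = h \<otimes> k"
proof -
  have Yc: "Y \<subseteq> carrier G" using Y by (auto simp: conj_normalizer_def)
  have normalizes: "generate G Y \<subseteq> conj_normalizer H"
    using generate_subgroup_incl[OF Y subgroup_conj_normalizer[OF subgroup.subset[OF H]]] .
  note Hc = subgroup.mem_carrier[OF H]
  from \<phi> show ?thesis
  proof (induct \<phi> rule: generate.induct)
    case one then show ?case using subgroup.one_closed[OF H] generate.one by force
  next
    case (incl x)
    then consider "x \<in> H" | "x \<in> Y" by blast
    then show ?case
    proof cases
      case 1 then show ?thesis using generate.one[of G Y] Hc by force
    next
      case 2 then show ?thesis using subgroup.one_closed[OF H] generate.incl[of x Y G] Yc by force
    qed
  next
    case (inv x)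
    then consider "x \<in> H" | "x \<in> Y" by blast
    then show ?case
    proof cases
      case 1 then show ?thesis using generate.one[of G Y] subgroup.m_inv_closed[OF H] Hc by force
    next
      case 2 then show ?thesis using subgroup.one_closed[OF H] generate.inv[of x Y G] Yc by force
    qed
  next
    case (eng x1 x2)
    then obtain h1 k1 h2 k2 where d: "h1 \<in> H" "k1 \<in> generate G Y" "x1 = h1 \<otimes> k1"
      "h2 \<in> H" "k2 \<in> generate G Y" "x2 = h2 \<otimes> k2" by blast
    have k: "k1 \<in> carrier G" "k2 \<in> carrier G" using d(2,5) generate_in_carrier[OF Yc] by auto
    have "k1 \<otimes> h2 \<otimes> inv k1 \<in> H" using normalizes d(2,4) by (auto simp: conj_normalizer_def)
    then have "h1 \<otimes> (k1 \<otimes> h2 \<otimes> inv k1) \<in> H" using subgroup.m_closed[OF H d(1)] by blast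
    moreover have "x1 \<otimes> x2 = (h1 \<otimes> (k1 \<otimes> h2 \<otimes> inv k1)) \<otimes> (k1 \<otimes> k2)"
      using d k Hc by (simp add: m_assoc)
    moreover have "k1 \<otimes> k2 \<in> generate G Y" using generate.eng[OF d(2) d(5)] .
    ultimately show ?case by blast
  qed
qed

text \<open>Conjugation by \<open>a [^] n\<close> multiplies \<open>b\<close> by \<open>c [^] n\<close>.\<close>
lemma (in group) pow_eq_one_if_conj_eq_mult:
  assumes a: "a \<in> carrier G" and b: "b \<in> carrier G" and c: "c \<in> carrier G"
    and conj: "a \<otimes> b \<otimes> inv a = c \<otimes> b" and ca: "c \<otimes> a = a \<otimes> c"
    and comm: "a [^] (n::nat) \<otimes> b = b \<otimes> a [^] n"
  shows "c [^] n = \<one>"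
proof -
  have conj_pow: "a [^] m \<otimes> b \<otimes> inv (a [^] m) = c [^] m \<otimes> b" for m :: nat
  proof (induct m)
    case 0 then show ?case using b by simp
  next
    case (Suc m)
    have "a [^] Suc m \<otimes> b \<otimes> inv (a [^] Suc m) = a [^] m \<otimes> (a \<otimes> b \<otimes> inv a) \<otimes> inv (a [^] m)"
      using a b by (simp add: m_assoc inv_mult_group)
    also have "\<dots> = (c \<otimes> a [^] m) \<otimes> b \<otimes> inv (a [^] m)"
      using conj commute_nat_pow[OF a c ca, of m] a b c by (simp add: m_assoc)
    also have "\<dots> = c \<otimes> (c [^] m \<otimes> b)" using Suc a b c by (simp add: m_assoc)
    also have "\<dots> = c [^] Suc m \<otimes> b" using b c nat_pow_Suc2 by (simp add: m_assoc)
    finally show ?case .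
  qed
  have "a [^] n \<otimes> b \<otimes> inv (a [^] n) = b" using comm a b by (simp add: m_assoc)
  then show ?thesis using conj_pow[of n] b c by simp
qed

section \<open>Sylow subgroups of finite nilpotent groups\<close>

lemma coprime_multiplicity_power_div:
  fixes p n :: nat
  assumes "Factorial_Ring.prime p" "n \<noteq> 0"
  shows "coprime (p ^ multiplicity p n) (n div p ^ multiplicity p n)"
proof -
  have "\<not> p dvd (n div p ^ multiplicity p n)"
    using multiplicity_decompose[where x=n and p=p] assms not_prime_unit by blast
  then have "coprime p (n div p ^ multiplicity p n)" using assms(1) prime_imp_coprime by blast
  then show ?thesis by simp
qed

lemma (in group) lower_central_subgroup: "subgroup (lower_central G i) G"
proof (induct i)
  case 0 then show ?case by (simp add: subgroup_self)
next
  case (Suc i)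
  have "(\<Union>h\<in>carrier G. \<Union>k\<in>lower_central G i. {h \<otimes> k \<otimes> inv h \<otimes> inv k}) \<subseteq> carrier G"
    using subgroup.subset[OF Suc] by blast
  then show ?case by (simp add: generate_is_subgroup)
qed

lemma (in group) nilpotent_normalizer_grows:
  assumes nil: "lower_central G n = {\<one>}" and H: "subgroup H G" "H \<noteq> carrier G"
  shows "H \<subset> conj_normalizer H"
proof -
  define i where "i = (LEAST i. lower_central G i \<subseteq> H)"
  have "lower_central G n \<subseteq> H" using nil subgroup.one_closed[OF H(1)] by auto
  then have below: "lower_central G i \<subseteq> H" unfolding i_def by (rule LeastI)
  have "i \<noteq> 0" using below subgroup.subset[OF H(1)] H(2) by auto
  then obtain j where ij: "i = Suc j" using not0_implies_Suc by blast
  have "\<not> lower_central G j \<subseteq> H"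
    using ij i_def not_less_Least[of j "\<lambda>i. lower_central G i \<subseteq> H"] by auto
  then obtain g where g: "g \<in> lower_central G j" "g \<notin> H" by blast
  have conj: "x \<otimes> h \<otimes> inv x \<in> H" if x: "x \<in> lower_central G j" and h: "h \<in> H" for x h
  proof -
    have xc: "x \<in> carrier G" using subgroup.mem_carrier[OF lower_central_subgroup x] .
    have hc: "h \<in> carrier G" using subgroup.mem_carrier[OF H(1) h] .
    have "inv h \<otimes> x \<otimes> inv (inv h) \<otimes> inv x \<in> lower_central G (Suc j)"
      unfolding lower_central.simps using x hc by (intro generate.incl) blast
    then have "h \<otimes> (inv h \<otimes> x \<otimes> h \<otimes> inv x) \<in> H"
      using below ij hc subgroup.m_closed[OF H(1) h] by auto
    then show ?thesis using xc hc by (simp add: m_assoc)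
  qed
  have gc: "g \<in> carrier G" using subgroup.mem_carrier[OF lower_central_subgroup g(1)] .
  have "inv g \<in> lower_central G j" using subgroup.m_inv_closed[OF lower_central_subgroup g(1)] .
  then have "inv g \<otimes> h \<otimes> g \<in> H" if "h \<in> H" for h using conj[of "inv g" h] that gc by simp
  then have "g \<in> conj_normalizer H" using conj g(1) gc by (simp add: conj_normalizer_def)
  then show ?thesis using g(2) subgroup_subset_conj_normalizer[OF H(1)] by blast
qed

lemma (in group) normal_mem_if_pow_coprime_index:
  assumes "S \<lhd> G" "finite (carrier G)" "z \<in> carrier G" "z [^] (j::nat) = \<one>"
    "coprime j (card (rcosets S))"
  shows "z \<in> S"
proof -
  interpret N: normal S G by (rule assms(1))
  interpret Q: group "G Mod S" by (rule N.factorgroup_is_group)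
  define c where "c = card (rcosets S)"
  have "S #> z \<in> carrier (G Mod S)" using assms(3) by (auto simp: FactGroup_def RCOSETS_def)
  then have "(S #> z) [^]\<^bsub>G Mod S\<^esub> c = \<one>\<^bsub>G Mod S\<^esub>"
    using Q.pow_order_eq_1 by (simp add: order_def FactGroup_def c_def)
  moreover have "S #> (z [^] c) = (S #> z) [^]\<^bsub>G Mod S\<^esub> c"
    using hom_nat_pow[OF N.r_coset_hom_Mod assms(3) is_group Q.is_group] .
  ultimately have "S #> (z [^] c) = S" by simp
  then have zc: "z [^] c \<in> S" using rcos_self[of "z [^] c" S] assms(3) N.subgroup_axioms by simp
  have "finite (rcosets S)" using assms(2) by (simp add: RCOSETS_def)
  moreover have "rcosets S \<noteq> {}" using N.subgroup_in_rcosets[OF is_group] by blast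
  ultimately have "c \<noteq> 0" by (simp add: c_def)
  then obtain x y where "c * x = j * y + gcd c j" using bezout_nat by blast
  then have "c * x = 1 + j * y" using assms(5) by (simp add: c_def coprime_commute)
  then have "z = (z [^] c) [^] x" using pow_one_plus_mult[OF assms(3,4)] assms(3) by (simp add: nat_pow_pow)
  then show ?thesis using subgroup_nat_pow_closed[OF N.subgroup_axioms zc] by metis
qed

lemma (in group) sylow_mem_if_pow_card:
  assumes fin: "finite (carrier G)" and p: "Factorial_Ring.prime p" and syl: "sylow_subgroup G p P"
    and K: "subgroup K G" "P \<subseteq> K" "P \<lhd> G\<lparr>carrier := K\<rparr>"
    and z: "z \<in> K" "z [^] card P = \<one>"
  shows "z \<in> P"
proof -
  interpret K: group "G\<lparr>carrier := K\<rparr>" using subgroup_imp_group[OF K(1)] .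
  define k where "k = multiplicity p (order G)"
  define m where "m = order G div p ^ k"
  have subP: "subgroup P G" and cardP: "card P = p ^ k"
    using syl by (auto simp: sylow_subgroup_def k_def)
  have finK: "finite K" using fin subgroup.subset[OF K(1)] finite_subset by blast
  have "order G \<noteq> 0" using fin subgroup.one_closed[OF subP] subgroup.mem_carrier[OF subP]
    by (auto simp: order_def card_eq_0_iff)
  then have cop: "coprime (p ^ k) m"
    unfolding m_def k_def using coprime_multiplicity_power_div[OF p] by blast
  have "card (rcosets\<^bsub>G\<lparr>carrier := K\<rparr>\<^esub> P) * card P = card K"
    using K.lagrange[OF subgroup_incl[OF subP K(1,2)]] by (simp add: order_def)
  moreover have "card (rcosets K) * card K = p ^ k * m"
    using lagrange[OF K(1)] multiplicity_dvd[of p "order G"] by (simp add: m_def k_def)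
  ultimately have "card (rcosets\<^bsub>G\<lparr>carrier := K\<rparr>\<^esub> P) * card (rcosets K) * p ^ k = p ^ k * m"
    using cardP by (metis mult.assoc mult.commute)
  then have "card (rcosets\<^bsub>G\<lparr>carrier := K\<rparr>\<^esub> P) dvd m"
    using p by (metis dvd_triv_left mult.commute mult_cancel_left power_not_zero not_prime_0 mult.assoc)
  then have "coprime (card P) (card (rcosets\<^bsub>G\<lparr>carrier := K\<rparr>\<^esub> P))"
    using cop cardP coprime_divisors dvd_refl by metis
  moreover have "z [^]\<^bsub>G\<lparr>carrier := K\<rparr>\<^esub> card P = \<one>\<^bsub>G\<lparr>carrier := K\<rparr>\<^esub>"
    using z by (simp add: nat_pow_consistent [symmetric])
  ultimately show ?thesis using K.normal_mem_if_pow_coprime_index[OF K(3)] finK z(1) by simp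
qed

lemma (in group) nilpotent_sylow_normal:
  assumes fin: "finite (carrier G)" and nil: "lower_central G n = {\<one>}"
    and p: "Factorial_Ring.prime p" and syl: "sylow_subgroup G p P"
  shows "P \<lhd> G"
proof -
  have subP: "subgroup P G" using syl by (simp add: sylow_subgroup_def)
  note Pc = subgroup.mem_carrier[OF subP]
  have subN: "subgroup (conj_normalizer P) G" using subgroup_conj_normalizer subgroup.subset[OF subP] .
  note PN = subgroup_subset_conj_normalizer[OF subP]
  have conj_mem: "x \<otimes> h \<otimes> inv x \<in> P"
    if "x \<in> carrier G" "x \<otimes> h \<otimes> inv x \<in> conj_normalizer P" "h \<in> P" for x h
    using sylow_mem_if_pow_card[OF fin p syl subN PN normal_in_conj_normalizer[OF subP]] that Pc
      conj_nat_pow subgroup_pow_card_eq_one[OF subP finite_subset[OF subgroup.subset[OF subP] fin]]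
    by simp
  \<comment> \<open>\<open>P\<close> contains the \<open>p\<close>-elements of its normalizer, so the normalizer is self-normalizing\<close>
  have "conj_normalizer P = carrier G"
  proof (rule ccontr)
    assume "conj_normalizer P \<noteq> carrier G"
    then obtain g where "g \<in> conj_normalizer (conj_normalizer P)" "g \<notin> conj_normalizer P"
      using nilpotent_normalizer_grows[OF nil subN] by blast
    moreover from this(1) have "g \<in> carrier G"
      "\<forall>x\<in>conj_normalizer P. g \<otimes> x \<otimes> inv g \<in> conj_normalizer P \<and> inv g \<otimes> x \<otimes> g \<in> conj_normalizer P"
      by (auto simp: conj_normalizer_def)
    then have "g \<in> conj_normalizer P"
      using conj_mem[of g] conj_mem[of "inv g"] PN by (auto simp: conj_normalizer_def [of P])
    ultimately show False by blast
  qed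
  then show ?thesis using normal_inv_iff subP by (auto simp: conj_normalizer_def)
qed

locale finite_nilpotent_group = group G for G (structure) +
  assumes finite_carrier: "finite (carrier G)"
    and nilpotent: "\<exists>n. lower_central G n = {\<one>}"
begin

abbreviation "order_primes \<equiv> prime_factors (order G)"

definition "sylow_order p = p ^ multiplicity p (order G)"
definition "sylow_index p = order G div sylow_order p"
definition "Syl p = (SOME P. sylow_subgroup G p P)"

lemma order_nonzero: "order G \<noteq> 0"
  using finite_carrier by (auto simp: order_def card_eq_0_iff)

lemma order_primes_prime: "p \<in> order_primes \<Longrightarrow> Factorial_Ring.prime p"
  by auto

lemma order_eq_sylow_order_mult_index: "order G = sylow_order p * sylow_index p"
  unfolding sylow_index_def sylow_order_def using multiplicity_dvd[of p "order G"] by simp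

lemma coprime_sylow_order_index: "p \<in> order_primes \<Longrightarrow> coprime (sylow_order p) (sylow_index p)"
  unfolding sylow_index_def sylow_order_def
  using coprime_multiplicity_power_div[OF order_primes_prime order_nonzero] .

lemma sylow_subgroup_Syl: "p \<in> order_primes \<Longrightarrow> sylow_subgroup G p (Syl p)"
proof -
  assume p: "p \<in> order_primes"
  have "\<exists>P. subgroup P G \<and> card P = sylow_order p"
    using sylow_thm[OF order_primes_prime[OF p] is_group
        order_eq_sylow_order_mult_index[of p, unfolded sylow_order_def] finite_carrier]
    unfolding sylow_order_def .
  then have "\<exists>P. sylow_subgroup G p P" by (auto simp: sylow_subgroup_def sylow_order_def)
  then show ?thesis unfolding Syl_def by (rule someI_ex)
qed

lemma Syl_normal: "p \<in> order_primes \<Longrightarrow> Syl p \<lhd> G"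
  using nilpotent nilpotent_sylow_normal[OF finite_carrier _ order_primes_prime sylow_subgroup_Syl]
  by blast

lemma subgroup_Syl: "p \<in> order_primes \<Longrightarrow> subgroup (Syl p) G"
  using sylow_subgroup_Syl by (simp add: sylow_subgroup_def)

lemma card_Syl: "p \<in> order_primes \<Longrightarrow> card (Syl p) = sylow_order p"
  using sylow_subgroup_Syl by (simp add: sylow_subgroup_def sylow_order_def)

lemma Syl_carrier: "p \<in> order_primes \<Longrightarrow> x \<in> Syl p \<Longrightarrow> x \<in> carrier G"
  by (rule subgroup.mem_carrier[OF subgroup_Syl])

lemma one_Syl: "p \<in> order_primes \<Longrightarrow> \<one> \<in> Syl p"
  by (rule subgroup.one_closed[OF subgroup_Syl])

lemma mem_Syl_iff:
  assumes p: "p \<in> order_primes"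
  shows "z \<in> Syl p \<longleftrightarrow> z \<in> carrier G \<and> z [^] sylow_order p = \<one>"
proof
  assume z: "z \<in> Syl p"
  have "finite (Syl p)" using finite_subset[OF subgroup.subset[OF subgroup_Syl[OF p]] finite_carrier] .
  then show "z \<in> carrier G \<and> z [^] sylow_order p = \<one>"
    using Syl_carrier[OF p z] subgroup_pow_card_eq_one[OF subgroup_Syl[OF p] _ z] card_Syl[OF p] by simp
next
  assume "z \<in> carrier G \<and> z [^] sylow_order p = \<one>"
  then show "z \<in> Syl p"
    using sylow_mem_if_pow_card[OF finite_carrier order_primes_prime[OF p] sylow_subgroup_Syl[OF p]
        subgroup_self subgroup.subset[OF subgroup_Syl[OF p]]] Syl_normal[OF p] card_Syl[OF p]
    by simp
qed

lemma sylow_subgroup_unique: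
  assumes p: "p \<in> order_primes" and P: "sylow_subgroup G p P"
  shows "P = Syl p"
proof -
  have sub: "subgroup P G" and card: "card P = sylow_order p"
    using P by (auto simp: sylow_subgroup_def sylow_order_def)
  have "finite P" using finite_subset[OF subgroup.subset[OF sub] finite_carrier] .
  then have "P \<subseteq> Syl p"
    using subgroup_pow_card_eq_one[OF sub] subgroup.mem_carrier[OF sub] card mem_Syl_iff[OF p] by auto
  moreover have "finite (Syl p)" using finite_subset[OF subgroup.subset[OF subgroup_Syl[OF p]] finite_carrier] .
  ultimately show ?thesis using card_subset_eq card card_Syl[OF p] by metis
qed

lemma coprime_sylow_orders:
  "p \<in> order_primes \<Longrightarrow> q \<in> order_primes \<Longrightarrow> p \<noteq> q \<Longrightarrow> coprime (sylow_order p) (sylow_order q)"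
proof -
  assume "p \<in> order_primes" "q \<in> order_primes" "p \<noteq> q"
  then have "coprime p q" using primes_coprime order_primes_prime by blast
  then show ?thesis unfolding sylow_order_def by simp
qed

lemma Syl_inter_trivial:
  assumes p: "p \<in> order_primes" and q: "q \<in> order_primes" and pq: "p \<noteq> q"
    and z: "z \<in> Syl p" "z \<in> Syl q"
  shows "z = \<one>"
  using pow_eq_one_coprime coprime_sylow_orders[OF p q pq] z mem_Syl_iff p q by blast

lemma Syl_commute:
  assumes p: "p \<in> order_primes" and q: "q \<in> order_primes" and pq: "p \<noteq> q"
    and a: "a \<in> Syl p" and b: "b \<in> Syl q"
  shows "a \<otimes> b = b \<otimes> a"
proof -
  have ac: "a \<in> carrier G" and bc: "b \<in> carrier G" using a b p q Syl_carrier by auto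
  have "b \<otimes> inv a \<otimes> inv b \<in> Syl p"
    using normal.inv_op_closed2[OF Syl_normal[OF p] bc subgroup.m_inv_closed[OF subgroup_Syl[OF p] a]] .
  then have "a \<otimes> (b \<otimes> inv a \<otimes> inv b) \<in> Syl p" using subgroup.m_closed[OF subgroup_Syl[OF p] a] by blast
  moreover have "a \<otimes> b \<otimes> inv a \<otimes> inv b \<in> Syl q"
    using normal.inv_op_closed2[OF Syl_normal[OF q] ac b]
      subgroup.m_closed[OF subgroup_Syl[OF q] _ subgroup.m_inv_closed[OF subgroup_Syl[OF q] b]] by blast
  ultimately have "a \<otimes> b \<otimes> inv a \<otimes> inv b = \<one>"
    using Syl_inter_trivial[OF p q pq] ac bc by (simp add: m_assoc)
  then have "a \<otimes> b \<otimes> inv a \<otimes> inv b \<otimes> b \<otimes> a = b \<otimes> a" using ac bc by simp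
  then show ?thesis using ac bc by (simp add: m_assoc)
qed

lemma hom_Syl:
  assumes h: "h \<in> hom G G" and p: "p \<in> order_primes" and s: "s \<in> Syl p"
  shows "h s \<in> Syl p"
proof -
  have sc: "s \<in> carrier G" using Syl_carrier[OF p s] .
  have "h s [^] sylow_order p = h (s [^] sylow_order p)"
    using hom_nat_pow[OF h sc is_group is_group] by simp
  also have "\<dots> = \<one>" using s mem_Syl_iff[OF p] hom_one[OF h is_group is_group] by simp
  finally show ?thesis using mem_Syl_iff[OF p] h sc by (auto simp: hom_def)
qed

definition "proj_exp p = (SOME e. (\<exists>v. e = 1 + sylow_order p * v) \<and> sylow_index p dvd e)"
definition "proj p x = x [^] proj_exp p"

lemma proj_exp:
  assumes p: "p \<in> order_primes"
  shows "\<exists>v. proj_exp p = 1 + sylow_order p * v" "sylow_index p dvd proj_exp p"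
proof -
  have "sylow_order p \<noteq> 0" "sylow_index p \<noteq> 0"
    using order_nonzero order_eq_sylow_order_mult_index[of p] by auto
  then obtain e q1 q2 where "e = 1 + q1 * sylow_order p" "e = 0 + q2 * sylow_index p"
    using chinese_remainder[OF coprime_sylow_order_index[OF p], where u=1 and v=0] by blast
  then have "\<exists>e. (\<exists>v. e = 1 + sylow_order p * v) \<and> sylow_index p dvd e"
    by (metis add_0 dvd_triv_right mult.commute)
  then have "(\<exists>v. proj_exp p = 1 + sylow_order p * v) \<and> sylow_index p dvd proj_exp p"
    unfolding proj_exp_def by (rule someI_ex)
  then show "\<exists>v. proj_exp p = 1 + sylow_order p * v" "sylow_index p dvd proj_exp p" by auto
qed

lemma sylow_order_dvd_proj_exp:
  assumes p: "p \<in> order_primes" and q: "q \<in> order_primes" and qp: "q \<noteq> p"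
  shows "sylow_order q dvd proj_exp p"
proof -
  have "sylow_order q dvd sylow_order p * sylow_index p"
    using order_eq_sylow_order_mult_index[of q] order_eq_sylow_order_mult_index[of p] by (metis dvd_triv_left)
  then have "sylow_order q dvd sylow_index p"
    using coprime_sylow_orders[OF q p qp] coprime_dvd_mult_right_iff by blast
  then show ?thesis using proj_exp(2)[OF p] by (rule dvd_trans)
qed

lemma proj_carrier: "x \<in> carrier G \<Longrightarrow> proj p x \<in> carrier G"
  by (simp add: proj_def)

lemma proj_in_Syl:
  assumes p: "p \<in> order_primes" and x: "x \<in> carrier G"
  shows "proj p x \<in> Syl p"
proof -
  have "order G dvd proj_exp p * sylow_order p"
    using proj_exp(2)[OF p] order_eq_sylow_order_mult_index[of p] by (simp add: mult.commute)
  then have "proj p x [^] sylow_order p = \<one>"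
    unfolding proj_def using pow_eq_one_if_order_dvd x by (simp add: nat_pow_pow)
  then show ?thesis using mem_Syl_iff[OF p] x by (simp add: proj_def)
qed

lemma proj_Syl: "p \<in> order_primes \<Longrightarrow> s \<in> Syl p \<Longrightarrow> proj p s = s"
  using proj_exp(1) pow_one_plus_mult mem_Syl_iff unfolding proj_def by metis

lemma proj_one: "proj p \<one> = \<one>"
  by (simp add: proj_def)

lemma proj_other_Syl:
  assumes "p \<in> order_primes" "q \<in> order_primes" "q \<noteq> p" "s \<in> Syl q"
  shows "proj p s = \<one>"
proof -
  obtain c where "proj_exp p = sylow_order q * c" using sylow_order_dvd_proj_exp assms by blast
  then show ?thesis using assms mem_Syl_iff by (simp add: proj_def nat_pow_pow [symmetric])
qed

lemma proj_inv: "x \<in> carrier G \<Longrightarrow> proj p (inv x) = inv (proj p x)"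
  by (simp add: proj_def nat_pow_inv)

lemma hom_proj_commute: "h \<in> hom G G \<Longrightarrow> x \<in> carrier G \<Longrightarrow> proj p (h x) = h (proj p x)"
  unfolding proj_def using hom_nat_pow[OF _ _ is_group is_group] by simp

primrec Syl_prod :: "nat list \<Rightarrow> 'a set" where
  "Syl_prod [] = {\<one>}"
| "Syl_prod (q # qs) = {a \<otimes> b | a b. a \<in> Syl q \<and> b \<in> Syl_prod qs}"

lemma Syl_prod_carrier: "set qs \<subseteq> order_primes \<Longrightarrow> b \<in> Syl_prod qs \<Longrightarrow> b \<in> carrier G"
  by (induct qs arbitrary: b) (auto dest: Syl_carrier)

lemma Syl_prod_commute:
  assumes "set qs \<subseteq> order_primes" "p \<in> order_primes" "p \<notin> set qs" "s \<in> Syl p"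
  shows "b \<in> Syl_prod qs \<Longrightarrow> s \<otimes> b = b \<otimes> s"
  using assms(1,3)
proof (induct qs arbitrary: b)
  case Nil then show ?case using Syl_carrier[OF assms(2,4)] by simp
next
  case (Cons q qs)
  then obtain a b' where ab: "b = a \<otimes> b'" "a \<in> Syl q" "b' \<in> Syl_prod qs" by auto
  have c: "a \<in> carrier G" "b' \<in> carrier G" "s \<in> carrier G"
    using Cons.prems ab Syl_carrier Syl_prod_carrier assms(2,4) by auto
  have "s \<otimes> a = a \<otimes> s" using Syl_commute[OF assms(2) _ _ assms(4) ab(2)] Cons.prems by auto
  moreover have "s \<otimes> b' = b' \<otimes> s" using Cons ab(3) by simp
  ultimately show ?case using ab(1) c by (metis m_assoc)
qed

lemma Syl_prod_pow_eq_one: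
  assumes "set qs \<subseteq> order_primes" "distinct qs" "\<forall>q\<in>set qs. sylow_order q dvd N"
  shows "b \<in> Syl_prod qs \<Longrightarrow> b [^] N = \<one>"
  using assms
proof (induct qs arbitrary: b)
  case Nil then show ?case by simp
next
  case (Cons q qs)
  then obtain a b' where ab: "b = a \<otimes> b'" "a \<in> Syl q" "b' \<in> Syl_prod qs" by auto
  have q: "q \<in> order_primes" using Cons.prems by simp
  have c: "a \<in> carrier G" "b' \<in> carrier G" using Syl_carrier[OF q ab(2)] Syl_prod_carrier Cons.prems ab by auto
  have "a [^] N = \<one>"
  proof -
    have "sylow_order q dvd N" using Cons.prems(4) by simp
    then obtain c where "N = sylow_order q * c" by (rule dvdE)
    then show ?thesis using ab(2) mem_Syl_iff[OF q] by (simp add: nat_pow_pow [symmetric])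
  qed
  moreover have "b' [^] N = \<one>" using Cons ab(3) by simp
  moreover have "a \<otimes> b' = b' \<otimes> a" using Syl_prod_commute[OF _ q _ ab(2) ab(3)] Cons.prems by simp
  ultimately show ?case using pow_mult_distrib c ab(1) by simp
qed

lemma Syl_prod_mult_closed:
  assumes "set qs \<subseteq> order_primes" "distinct qs"
  shows "b1 \<in> Syl_prod qs \<Longrightarrow> b2 \<in> Syl_prod qs \<Longrightarrow> b1 \<otimes> b2 \<in> Syl_prod qs"
  using assms
proof (induct qs arbitrary: b1 b2)
  case Nil then show ?case by simp
next
  case (Cons q qs)
  obtain a1 c1 where 1: "b1 = a1 \<otimes> c1" "a1 \<in> Syl q" "c1 \<in> Syl_prod qs" using Cons.prems by auto
  obtain a2 c2 where 2: "b2 = a2 \<otimes> c2" "a2 \<in> Syl q" "c2 \<in> Syl_prod qs" using Cons.prems by auto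
  have q: "q \<in> order_primes" using Cons.prems by simp
  have cs: "a1 \<in> carrier G" "a2 \<in> carrier G" "c1 \<in> carrier G" "c2 \<in> carrier G"
    using Syl_carrier[OF q] Syl_prod_carrier 1 2 Cons.prems by auto
  have "c1 \<otimes> a2 = a2 \<otimes> c1" using Syl_prod_commute[OF _ q _ 2(2) 1(3)] Cons.prems by simp
  moreover have "b1 \<otimes> b2 = a1 \<otimes> (c1 \<otimes> a2) \<otimes> c2" using 1 2 cs by (simp add: m_assoc)
  ultimately have "b1 \<otimes> b2 = (a1 \<otimes> a2) \<otimes> (c1 \<otimes> c2)" using cs by (simp add: m_assoc)
  moreover have "a1 \<otimes> a2 \<in> Syl q" using subgroup.m_closed[OF subgroup_Syl[OF q] 1(2) 2(2)] .
  moreover have "c1 \<otimes> c2 \<in> Syl_prod qs" using Cons 1(3) 2(3) by simp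
  ultimately show ?case by auto
qed

lemma pow_sum_proj_exp_in_Syl_prod:
  "set qs \<subseteq> order_primes \<Longrightarrow> x \<in> carrier G \<Longrightarrow> x [^] sum_list (map proj_exp qs) \<in> Syl_prod qs"
proof (induct qs)
  case Nil then show ?case by simp
next
  case (Cons q qs)
  then have "x [^] sum_list (map proj_exp (q # qs)) = proj q x \<otimes> x [^] sum_list (map proj_exp qs)"
    by (simp add: nat_pow_mult proj_def)
  then show ?case using Cons proj_in_Syl by auto
qed

definition "prime_list = sorted_list_of_set order_primes"
definition "total_exp = sum_list (map proj_exp prime_list)"
definition "compl_exp p = sum_list (map proj_exp (remove1 p prime_list))"
definition "Syl_compl p = Syl_prod (remove1 p prime_list)"

lemma set_prime_list: "set prime_list = order_primes"
  by (simp add: prime_list_def)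

lemma distinct_prime_list: "distinct prime_list"
  by (simp add: prime_list_def)

lemma set_remove1_prime_list: "set (remove1 p prime_list) = order_primes - {p}"
  using distinct_prime_list set_prime_list by simp

lemma sylow_order_dvd_sum_proj_exp:
  "set qs \<subseteq> order_primes \<Longrightarrow> q \<in> order_primes \<Longrightarrow> q \<notin> set qs \<Longrightarrow>
    sylow_order q dvd sum_list (map proj_exp qs)"
  by (induct qs) (simp_all add: sylow_order_dvd_proj_exp)

lemma total_exp_split: "p \<in> order_primes \<Longrightarrow> total_exp = proj_exp p + compl_exp p"
  unfolding total_exp_def compl_exp_def using sum_list_map_remove1[of p prime_list] set_prime_list by simp

lemma sylow_order_dvd_compl_exp: "p \<in> order_primes \<Longrightarrow> sylow_order p dvd compl_exp p"
  unfolding compl_exp_def using sylow_order_dvd_sum_proj_exp set_remove1_prime_list by auto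

lemma order_dvd_total_exp_minus_one: "order G dvd total_exp - 1"
proof (cases "total_exp - 1 = 0")
  case False
  show ?thesis
  proof (rule multiplicity_le_imp_dvd[OF order_nonzero])
    fix r :: nat assume r: "Factorial_Ring.prime r"
    show "multiplicity r (order G) \<le> multiplicity r (total_exp - 1)"
    proof (cases "r \<in> order_primes")
      case True
      obtain v where "proj_exp r = 1 + sylow_order r * v" using proj_exp(1)[OF True] by blast
      then have "total_exp - 1 = sylow_order r * v + compl_exp r" using total_exp_split[OF True] by simp
      then have "sylow_order r dvd total_exp - 1" using sylow_order_dvd_compl_exp[OF True] by simp
      then show ?thesis
        using power_dvd_iff_le_multiplicity[where x="total_exp - 1" and p=r] False r not_prime_unit
        unfolding sylow_order_def by blast
    next
      case False
      then show ?thesis using r order_nonzero by (simp add: in_prime_factors_iff not_dvd_imp_multiplicity_0)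
    qed
  qed
qed simp

lemma pow_total_exp:
  assumes x: "x \<in> carrier G"
  shows "x [^] total_exp = x"
proof (cases "order_primes = {}")
  case True
  then have "order G = 1" using order_nonzero prime_factorization_empty_iff[of "order G"] by simp
  then show ?thesis using x pow_eq_one_if_order_dvd[OF x, of 1] pow_eq_one_if_order_dvd[OF x] by simp
next
  case False
  then obtain p where p: "p \<in> order_primes" by blast
  obtain v where "proj_exp p = 1 + sylow_order p * v" using proj_exp(1)[OF p] by blast
  then have "total_exp = 1 + (total_exp - 1)" using total_exp_split[OF p] by simp
  moreover obtain c where "total_exp - 1 = order G * c" using order_dvd_total_exp_minus_one by (rule dvdE)
  ultimately show ?thesis using pow_one_plus_mult[OF x pow_order_eq_1[OF x]] by simp
qed

lemma carrier_subset_Syl_prod: "carrier G \<subseteq> Syl_prod prime_list"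
  using pow_sum_proj_exp_in_Syl_prod[of prime_list] pow_total_exp set_prime_list
  by (auto simp: total_exp_def)

lemma proj_decomp:
  assumes p: "p \<in> order_primes" and x: "x \<in> carrier G"
  shows "x = proj p x \<otimes> x [^] compl_exp p" "x [^] compl_exp p \<in> Syl_compl p"
proof -
  show "x = proj p x \<otimes> x [^] compl_exp p"
    using pow_total_exp[OF x] total_exp_split[OF p] x by (simp add: proj_def nat_pow_mult)
  show "x [^] compl_exp p \<in> Syl_compl p"
    unfolding Syl_compl_def compl_exp_def
    using pow_sum_proj_exp_in_Syl_prod set_remove1_prime_list x by auto
qed

lemma Syl_compl_carrier: "b \<in> Syl_compl p \<Longrightarrow> b \<in> carrier G"
  unfolding Syl_compl_def using Syl_prod_carrier set_remove1_prime_list by blast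

lemma Syl_compl_commute: "p \<in> order_primes \<Longrightarrow> s \<in> Syl p \<Longrightarrow> b \<in> Syl_compl p \<Longrightarrow> s \<otimes> b = b \<otimes> s"
  unfolding Syl_compl_def using Syl_prod_commute set_remove1_prime_list by blast

lemma Syl_compl_mult_closed: "b1 \<in> Syl_compl p \<Longrightarrow> b2 \<in> Syl_compl p \<Longrightarrow> b1 \<otimes> b2 \<in> Syl_compl p"
  unfolding Syl_compl_def
  using Syl_prod_mult_closed[of "remove1 p prime_list"] set_remove1_prime_list distinct_prime_list
  by simp

lemma proj_Syl_compl: "p \<in> order_primes \<Longrightarrow> b \<in> Syl_compl p \<Longrightarrow> proj p b = \<one>"
  unfolding proj_def Syl_compl_def
  using Syl_prod_pow_eq_one[of "remove1 p prime_list" "proj_exp p" b] set_remove1_prime_list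
    distinct_prime_list sylow_order_dvd_proj_exp
  by simp

lemma proj_mult_Syl_compl:
  assumes p: "p \<in> order_primes" and s: "s \<in> Syl p" and b: "b \<in> Syl_compl p"
  shows "proj p (s \<otimes> b) = s"
proof -
  have "proj p (s \<otimes> b) = proj p s \<otimes> proj p b"
    unfolding proj_def
    using pow_mult_distrib[OF Syl_compl_commute[OF p s b] Syl_carrier[OF p s] Syl_compl_carrier[OF b]] .
  then show ?thesis using proj_Syl[OF p s] proj_Syl_compl[OF p b] Syl_carrier[OF p s] by simp
qed

lemma proj_mult:
  assumes p: "p \<in> order_primes" and x: "x \<in> carrier G" and y: "y \<in> carrier G"
  shows "proj p (x \<otimes> y) = proj p x \<otimes> proj p y"
proof -
  let ?a = "proj p x" and ?b = "x [^] compl_exp p" and ?c = "proj p y" and ?d = "y [^] compl_exp p"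
  have a: "?a \<in> Syl p" and c: "?c \<in> Syl p" using proj_in_Syl p x y by auto
  have b: "?b \<in> Syl_compl p" and d: "?d \<in> Syl_compl p" using proj_decomp p x y by auto
  have ac: "?a \<in> carrier G" "?c \<in> carrier G" using a c Syl_carrier[OF p] by auto
  have bc: "?b \<in> carrier G" "?d \<in> carrier G" using b d Syl_compl_carrier by auto
  have "x \<otimes> y = ?a \<otimes> (?b \<otimes> ?c) \<otimes> ?d"
    using proj_decomp(1)[OF p x] proj_decomp(1)[OF p y] ac bc by (metis m_assoc m_closed)
  also have "?b \<otimes> ?c = ?c \<otimes> ?b" using Syl_compl_commute[OF p c b] by simp
  also have "?a \<otimes> (?c \<otimes> ?b) \<otimes> ?d = (?a \<otimes> ?c) \<otimes> (?b \<otimes> ?d)" using ac bc by (simp add: m_assoc)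
  finally show ?thesis
    using proj_mult_Syl_compl[OF p subgroup.m_closed[OF subgroup_Syl[OF p] a c] Syl_compl_mult_closed[OF b d]]
    by simp
qed

lemma Syl_compl_shift_to_proj:
  assumes p: "p \<in> order_primes" and x: "x \<in> carrier G"
  shows "\<exists>h\<in>Syl_compl p. h \<otimes> x = proj p x"
proof -
  let ?h = "inv x [^] compl_exp p"
  have "?h \<in> Syl_compl p" using proj_decomp(2)[OF p] x by simp
  moreover have "x = x [^] compl_exp p \<otimes> proj p x"
    using proj_decomp(1)[OF p x] nat_pow_comm[OF x] by (simp add: proj_def)
  then have "?h \<otimes> x = proj p x"
    using x nat_pow_inv[OF x] inv_mult_cancel_left[of "x [^] compl_exp p" "proj p x"] proj_carrier
    by simp
  ultimately show ?thesis by blast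
qed

end

section \<open>Retractions of quandles\<close>

lemma inn_gen_closed:
  assumes "quandle Q op" "g \<in> inn_gen Q op" "y \<in> Q"
  shows "g y \<in> Q"
  using assms(2,3)
proof (induct g rule: inn_gen.induct)
  case (Linv_in g x)
  then show ?case using assms(1) by (auto simp: quandle_def bij_betw_def inv_into_into)
qed (use assms(1) in \<open>auto simp: quandle_def\<close>)

lemma inn_gen_hom:
  assumes Q: "quandle Q op" and Q': "quandle Q' op"
    and h: "\<forall>x\<in>Q. h x \<in> Q'" "\<forall>x\<in>Q. \<forall>y\<in>Q. h (op x y) = op (h x) (h y)"
    and g: "g \<in> inn_gen Q op"
  shows "\<exists>g'\<in>inn_gen Q' op. \<forall>w\<in>Q. h (g w) = g' (h w)"
  using g
proof (induct g rule: inn_gen.induct)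
  case id_in
  have "\<forall>w\<in>Q. h (id w) = id (h w)" by simp
  then show ?case using inn_gen.id_in by blast
next
  case (L_in g x)
  then obtain g' where g': "g' \<in> inn_gen Q' op" "\<forall>w\<in>Q. h (g w) = g' (h w)" by blast
  have "op (h x) \<circ> g' \<in> inn_gen Q' op" using inn_gen.L_in[OF g'(1)] h(1) L_in(3) by blast
  moreover have "\<forall>w\<in>Q. h ((op x \<circ> g) w) = (op (h x) \<circ> g') (h w)"
    using h(2) g'(2) L_in(3) inn_gen_closed[OF Q L_in(1)] by simp
  ultimately show ?case by blast
next
  case (Linv_in g x)
  then obtain g' where g': "g' \<in> inn_gen Q' op" "\<forall>w\<in>Q. h (g w) = g' (h w)" by blast
  have bij: "bij_betw (op x) Q Q" "bij_betw (op (h x)) Q' Q'"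
    using Q Q' h(1) Linv_in(3) by (auto simp: quandle_def)
  have inv: "h (inv_into Q (op x) v) = inv_into Q' (op (h x)) (h v)" if v: "v \<in> Q" for v
  proof -
    let ?u = "inv_into Q (op x) v"
    have "?u \<in> Q" "op x ?u = v" using bij(1) v by (auto simp: bij_betw_def inv_into_into f_inv_into_f)
    then have "op (h x) (h ?u) = h v" using h(2) Linv_in(3) by metis
    then show ?thesis using bij(2) h(1) \<open>?u \<in> Q\<close> by (metis bij_betw_def inv_into_f_eq)
  qed
  have "inv_into Q' (op (h x)) \<circ> g' \<in> inn_gen Q' op" using inn_gen.Linv_in[OF g'(1)] h(1) Linv_in(3) by blast
  moreover have "\<forall>w\<in>Q. h ((inv_into Q (op x) \<circ> g) w) = (inv_into Q' (op (h x)) \<circ> g') (h w)"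
    using inv g'(2) inn_gen_closed[OF Q Linv_in(1)] by simp
  ultimately show ?case by blast
qed

lemma quandle_connected_retract:
  assumes conn: "quandle_connected Q op" and Q': "quandle Q' op" "Q' \<subseteq> Q"
    and h: "\<forall>x\<in>Q. h x \<in> Q'" "\<forall>x\<in>Q. \<forall>y\<in>Q. h (op x y) = op (h x) (h y)" "\<forall>x\<in>Q'. h x = x"
  shows "quandle_connected Q' op"
  unfolding quandle_connected_def
proof (intro conjI ballI)
  fix y z assume yz: "y \<in> Q'" "z \<in> Q'"
  have "y \<in> Q" "z \<in> Q" using yz Q'(2) by auto
  then obtain g where g: "g \<in> inn_gen Q op" "g y = z" using conn by (auto simp: quandle_connected_def)
  obtain g' where "g' \<in> inn_gen Q' op" "\<forall>w\<in>Q. h (g w) = g' (h w)"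
    using inn_gen_hom[OF _ Q'(1) h(1,2) g(1)] conn by (auto simp: quandle_connected_def)
  then show "\<exists>g\<in>inn_gen Q' op. g y = z" using g(2) h(3) yz Q'(2) by (metis subsetD)
qed (rule Q'(1))

lemma quandle_cocycle_subset:
  "quandle_cocycle Q op S \<theta> \<Longrightarrow> Q' \<subseteq> Q \<Longrightarrow> quandle_cocycle Q' op S \<theta>"
  unfolding quandle_cocycle_def by blast

lemma quandle_cocycle_pullback:
  assumes "quandle_cocycle Q' op S \<theta>"
    and "\<forall>x\<in>Q. h x \<in> Q'" "\<forall>x\<in>Q. \<forall>y\<in>Q. h (op x y) = op (h x) (h y)"
  shows "quandle_cocycle Q op S (\<lambda>x y. \<theta> (h x) (h y))"
  using assms unfolding quandle_cocycle_def by simp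

lemma cohomologous_trivial_retract:
  assumes "cohomologous_trivial Q op S (\<lambda>x y. \<theta> (h x) (h y))"
    and "Q' \<subseteq> Q" "\<forall>x\<in>Q'. h x = x"
  shows "cohomologous_trivial Q' op S \<theta>"
proof -
  obtain \<gamma> where "\<forall>x\<in>Q. bij_betw (\<gamma> x) S S"
    and "\<forall>x\<in>Q. \<forall>y\<in>Q. \<forall>s\<in>S. \<theta> (h x) (h y) s = \<gamma> (op x y) (inv_into S (\<gamma> y) s)"
    using assms(1) by (auto simp: cohomologous_trivial_def)
  then show ?thesis using assms(2,3) unfolding cohomologous_trivial_def by (metis subsetD)
qed

lemma simply_connected_retract:
  assumes sc: "simply_connected Q op TYPE('s)" and Q': "quandle Q' op" "Q' \<subseteq> Q"
    and h: "\<forall>x\<in>Q. h x \<in> Q'" "\<forall>x\<in>Q. \<forall>y\<in>Q. h (op x y) = op (h x) (h y)" "\<forall>x\<in>Q'. h x = x"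
  shows "simply_connected Q' op TYPE('s)"
  unfolding simply_connected_def
proof (intro conjI allI impI)
  show "quandle_connected Q' op"
    using quandle_connected_retract[OF _ Q' h] sc by (simp add: simply_connected_def)
next
  fix S :: "'s set" and \<theta> assume "quandle_cocycle Q' op S \<theta>"
  then have "quandle_cocycle Q op S (\<lambda>x y. \<theta> (h x) (h y))"
    using quandle_cocycle_pullback[OF _ h(1,2)] by blast
  then have "cohomologous_trivial Q op S (\<lambda>x y. \<theta> (h x) (h y))"
    using sc by (simp add: simply_connected_def)
  then show "cohomologous_trivial Q' op S \<theta>" using cohomologous_trivial_retract Q'(2) h(3) by blast
qed

section \<open>The quandle \<open>Q(G,f)\<close>\<close>

locale group_aut = group G for G (structure) +
  fixes f :: "'a \<Rightarrow> 'a"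
  assumes aut: "f \<in> iso G G"
begin

abbreviation qmult :: "'a \<Rightarrow> 'a \<Rightarrow> 'a" (infixr \<open>\<triangleright>\<close> 65)
  where "x \<triangleright> y \<equiv> qop G f x y"

definition "finv = inv_into (carrier G) f"

sublocale f: group_hom G G f
  using aut by (simp add: group_hom_def group_hom_axioms_def iso_def is_group)

sublocale finv: group_hom G G finv
  using iso_set_sym[OF aut] by (simp add: finv_def group_hom_def group_hom_axioms_def iso_def is_group)

lemma f_finv: "x \<in> carrier G \<Longrightarrow> f (finv x) = x"
  using aut by (simp add: finv_def iso_def bij_betw_def f_inv_into_f)

lemma finv_f: "x \<in> carrier G \<Longrightarrow> finv (f x) = x"
  using aut by (simp add: finv_def iso_def bij_betw_def inv_into_f_f)

definition "Linv x z = x \<otimes> finv (inv x \<otimes> z)"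

lemma Linv_closed: "x \<in> carrier G \<Longrightarrow> z \<in> carrier G \<Longrightarrow> Linv x z \<in> carrier G"
  by (simp add: Linv_def)

lemma qop_Linv: "x \<in> carrier G \<Longrightarrow> z \<in> carrier G \<Longrightarrow> x \<triangleright> Linv x z = z"
  by (simp add: qop_def Linv_def f_finv)

lemma Linv_qop: "x \<in> carrier G \<Longrightarrow> z \<in> carrier G \<Longrightarrow> Linv x (x \<triangleright> z) = z"
  by (simp add: qop_def Linv_def finv_f)

lemma qop_idem: "x \<in> carrier G \<Longrightarrow> x \<triangleright> x = x"
  by (simp add: qop_def)

lemma one_qop: "y \<in> carrier G \<Longrightarrow> \<one> \<triangleright> y = f y"
  by (simp add: qop_def)

lemma Linv_one: "y \<in> carrier G \<Longrightarrow> Linv \<one> y = finv y"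
  by (simp add: Linv_def)

lemma qop_self_distrib:
  assumes x: "x \<in> carrier G" and y: "y \<in> carrier G" and z: "z \<in> carrier G"
  shows "x \<triangleright> (y \<triangleright> z) = (x \<triangleright> y) \<triangleright> (x \<triangleright> z)"
proof -
  have "x \<triangleright> (y \<triangleright> z) = x \<otimes> f (inv x \<otimes> y) \<otimes> f (f (inv y \<otimes> z))"
    using x y z by (simp add: qop_def m_assoc)
  moreover have "inv (x \<otimes> f (inv x \<otimes> y)) \<otimes> (x \<otimes> f (inv x \<otimes> z)) = f (inv y \<otimes> x) \<otimes> f (inv x \<otimes> z)"
    using x y z by (simp add: inv_mult_group m_assoc)
  moreover have "f (inv y \<otimes> x) \<otimes> f (inv x \<otimes> z) = f (inv y \<otimes> z)"
    using x y z by (simp add: f.hom_mult [symmetric] m_assoc del: f.hom_mult)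
  ultimately show ?thesis by (simp add: qop_def)
qed

lemma qop_Linv_eq_mult:
  assumes x: "x \<in> carrier G" and y: "y \<in> carrier G" and z: "z \<in> carrier G"
  shows "x \<triangleright> Linv y z = (x \<otimes> f (inv x \<otimes> y) \<otimes> inv y) \<otimes> z"
proof -
  have "x \<triangleright> Linv y z = x \<otimes> f (inv x \<otimes> y) \<otimes> f (finv (inv y \<otimes> z))"
    using x y z by (simp add: qop_def Linv_def m_assoc)
  also have "\<dots> = (x \<otimes> f (inv x \<otimes> y) \<otimes> inv y) \<otimes> z"
    using x y z by (simp add: f_finv m_assoc)
  finally show ?thesis .
qed

definition "invariant_subgroup H \<longleftrightarrow> subgroup H G \<and> f ` H = H"

lemma invariant_subgroup_carrier: "invariant_subgroup (carrier G)"
  using aut subgroup_self by (simp add: invariant_subgroup_def iso_def bij_betw_def)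

lemma invariant_subgroup_finv: "invariant_subgroup H \<Longrightarrow> s \<in> H \<Longrightarrow> finv s \<in> H"
  unfolding invariant_subgroup_def using finv_f subgroup.mem_carrier by (metis imageE)

lemma invariant_subgroup_Linv:
  assumes H: "invariant_subgroup H" and x: "x \<in> H" and z: "z \<in> H"
  shows "Linv x z \<in> H"
proof -
  have sub: "subgroup H G" using H by (simp add: invariant_subgroup_def)
  have "finv (inv x \<otimes> z) \<in> H"
    using invariant_subgroup_finv[OF H] subgroup.m_closed[OF sub subgroup.m_inv_closed[OF sub x] z] .
  then show ?thesis unfolding Linv_def using subgroup.m_closed[OF sub x] by blast
qed

lemma quandle_qop:
  assumes H: "invariant_subgroup H"
  shows "quandle H (\<triangleright>)"
proof -
  have sub: "subgroup H G" and fH: "\<forall>s\<in>H. f s \<in> H" using H by (auto simp: invariant_subgroup_def)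
  note Hc = subgroup.mem_carrier[OF sub]
  have closed: "\<And>x y. x \<in> H \<Longrightarrow> y \<in> H \<Longrightarrow> x \<triangleright> y \<in> H"
    unfolding qop_def using fH subgroup.m_closed[OF sub] subgroup.m_inv_closed[OF sub] by blast
  have "bij_betw ((\<triangleright>) x) H H" if x: "x \<in> H" for x
  proof (rule bij_betw_byWitness)
    show "\<forall>z\<in>H. Linv x (x \<triangleright> z) = z" "\<forall>z\<in>H. x \<triangleright> Linv x z = z"
      using Linv_qop qop_Linv Hc x by auto
    show "(\<triangleright>) x ` H \<subseteq> H" "Linv x ` H \<subseteq> H" using closed invariant_subgroup_Linv[OF H] x by auto
  qed
  then show ?thesis unfolding quandle_def using closed qop_self_distrib qop_idem Hc by blast
qed

lemma inv_into_qop: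
  assumes H: "invariant_subgroup H" and x: "x \<in> H" and z: "z \<in> H"
  shows "inv_into H ((\<triangleright>) x) z = Linv x z"
proof (rule inv_into_f_eq)
  show "inj_on ((\<triangleright>) x) H" using quandle_qop[OF H] x by (simp add: quandle_def bij_betw_def)
  show "Linv x z \<in> H" using invariant_subgroup_Linv[OF H x z] .
  show "x \<triangleright> Linv x z = z"
    using qop_Linv H x z subgroup.mem_carrier by (metis invariant_subgroup_def)
qed

end

locale nilpotent_group_aut = finite_nilpotent_group G + group_aut G f for G (structure) and f
begin

lemma invariant_subgroup_Syl:
  assumes p: "p \<in> order_primes"
  shows "invariant_subgroup (Syl p)"
  unfolding invariant_subgroup_def
proof (intro conjI subset_antisym)
  show "subgroup (Syl p) G" using subgroup_Syl[OF p] .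
  show "f ` Syl p \<subseteq> Syl p" using hom_Syl[OF f.homh p] by blast
  show "Syl p \<subseteq> f ` Syl p"
    using hom_Syl[OF finv.homh p] f_finv Syl_carrier[OF p] by (metis image_eqI subsetI)
qed

lemma proj_qop:
  "p \<in> order_primes \<Longrightarrow> x \<in> carrier G \<Longrightarrow> y \<in> carrier G \<Longrightarrow> proj p (x \<triangleright> y) = proj p x \<triangleright> proj p y"
  by (simp add: qop_def proj_mult proj_inv hom_proj_commute[OF f.homh] proj_carrier)

lemma simply_connected_Syl:
  assumes sc: "simply_connected (carrier G) (\<triangleright>) TYPE('s)" and p: "p \<in> order_primes"
  shows "simply_connected (Syl p) (\<triangleright>) TYPE('s)"
  using simply_connected_retract[OF sc quandle_qop[OF invariant_subgroup_Syl[OF p]]]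
    Syl_carrier[OF p] proj_in_Syl[OF p] proj_qop[OF p] proj_Syl[OF p]
  by blast

end

section \<open>The extension of a quandle by a cocycle\<close>

locale quandle_extension =
  fixes Q :: "'a set" and op :: "'a \<Rightarrow> 'a \<Rightarrow> 'a"
    and S :: "'s set" and \<theta> :: "'a \<Rightarrow> 'a \<Rightarrow> 's \<Rightarrow> 's" and s0 :: 's
  assumes quandle: "quandle Q op"
    and cocycle: "quandle_cocycle Q op S \<theta>"
    and s0: "s0 \<in> S"
begin

abbreviation "BG \<equiv> BijGroup (Q \<times> S)"

sublocale B: group BG
  by (rule group_BijGroup)

lemma op_closed: "x \<in> Q \<Longrightarrow> y \<in> Q \<Longrightarrow> op x y \<in> Q"
  using quandle by (simp add: quandle_def)

lemma op_bij: "x \<in> Q \<Longrightarrow> bij_betw (op x) Q Q"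
  using quandle by (simp add: quandle_def)

lemma op_self_distrib: "x \<in> Q \<Longrightarrow> y \<in> Q \<Longrightarrow> z \<in> Q \<Longrightarrow> op x (op y z) = op (op x y) (op x z)"
  using quandle unfolding quandle_def by blast

lemma cocycle_bij: "x \<in> Q \<Longrightarrow> y \<in> Q \<Longrightarrow> bij_betw (\<theta> x y) S S"
  using cocycle by (simp add: quandle_cocycle_def)

lemma cocycle_closed: "x \<in> Q \<Longrightarrow> y \<in> Q \<Longrightarrow> s \<in> S \<Longrightarrow> \<theta> x y s \<in> S"
  using cocycle_bij bij_betwE by blast

lemma cocycle_eq: "x \<in> Q \<Longrightarrow> y \<in> Q \<Longrightarrow> z \<in> Q \<Longrightarrow> s \<in> S \<Longrightarrow>
   \<theta> (op x y) (op x z) (\<theta> x z s) = \<theta> x (op y z) (\<theta> y z s)"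
  using cocycle unfolding quandle_cocycle_def by blast

lemma cocycle_idem: "x \<in> Q \<Longrightarrow> s \<in> S \<Longrightarrow> \<theta> x x s = s"
  using cocycle by (simp add: quandle_cocycle_def)

lemma BG_carrier: "carrier BG = Bij (Q \<times> S)"
  by (simp add: BijGroup_def)

lemma BG_mult_apply: "\<phi> \<in> Bij (Q \<times> S) \<Longrightarrow> \<psi> \<in> Bij (Q \<times> S) \<Longrightarrow> e \<in> Q \<times> S \<Longrightarrow> (\<phi> \<otimes>\<^bsub>BG\<^esub> \<psi>) e = \<phi> (\<psi> e)"
  by (simp add: BijGroup_def compose_def)

lemma BG_one_apply: "e \<in> Q \<times> S \<Longrightarrow> \<one>\<^bsub>BG\<^esub> e = e"
  by (simp add: BijGroup_def)

lemma Bij_closed: "\<phi> \<in> Bij (Q \<times> S) \<Longrightarrow> e \<in> Q \<times> S \<Longrightarrow> \<phi> e \<in> Q \<times> S"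
  using Bij_imp_funcset by blast

lemma BG_inv_apply:
  assumes "\<phi> \<in> Bij (Q \<times> S)" "e \<in> Q \<times> S" "\<phi> e = e'"
  shows "(inv\<^bsub>BG\<^esub> \<phi>) e' = e"
proof -
  have "inv_into (Q \<times> S) \<phi> (\<phi> e) = e" using assms(1,2) by (simp add: Bij_def bij_betw_def inv_into_f_f)
  then show ?thesis using assms Bij_closed[OF assms(1,2)] by (simp add: inv_BijGroup)
qed

lemma BG_eqI: "\<phi> \<in> Bij (Q \<times> S) \<Longrightarrow> \<psi> \<in> Bij (Q \<times> S) \<Longrightarrow> (\<And>e. e \<in> Q \<times> S \<Longrightarrow> \<phi> e = \<psi> e) \<Longrightarrow> \<phi> = \<psi>"
  by (metis Bij_imp_extensional extensionalityI)

text \<open>The left translations of the extension quandle \<open>Q \<times> S\<close> with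
  \<open>(x, s) * (y, t) = (x * y, \<theta>\<^sub>x\<^sub>,\<^sub>y t)\<close>; they do not depend on \<open>s\<close>.\<close>
definition "ext_L x = (\<lambda>e \<in> Q \<times> S. (op x (fst e), \<theta> x (fst e) (snd e)))"

definition "Ext_Inn = generate BG (ext_L ` Q)"

definition "base \<phi> y = fst (\<phi> (y, s0))"

definition "fibred \<phi> \<longleftrightarrow> \<phi> \<in> Bij (Q \<times> S) \<and> (\<forall>y\<in>Q. \<forall>t\<in>S. fst (\<phi> (y, t)) = base \<phi> y) \<and>
   (\<forall>y\<in>Q. \<phi> \<otimes>\<^bsub>BG\<^esub> ext_L y = ext_L (base \<phi> y) \<otimes>\<^bsub>BG\<^esub> \<phi>)"

lemma ext_L_apply: "y \<in> Q \<Longrightarrow> t \<in> S \<Longrightarrow> ext_L x (y, t) = (op x y, \<theta> x y t)"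
  by (simp add: ext_L_def)

lemma ext_L_Bij:
  assumes x: "x \<in> Q"
  shows "ext_L x \<in> Bij (Q \<times> S)"
proof -
  have "bij_betw (ext_L x) (Q \<times> S) (Q \<times> S)"
  proof (rule bij_betw_imageI)
    show "inj_on (ext_L x) (Q \<times> S)"
    proof (rule inj_onI)
      fix a b assume a: "a \<in> Q \<times> S" and b: "b \<in> Q \<times> S" and eq: "ext_L x a = ext_L x b"
      obtain y t y' t' where ab: "a = (y, t)" "b = (y', t')" "y \<in> Q" "t \<in> S" "y' \<in> Q" "t' \<in> S"
        using a b by auto
      have "op x y = op x y'" "\<theta> x y t = \<theta> x y' t'" using eq ab ext_L_apply by auto
      then have "y = y'" using op_bij[OF x] ab by (auto simp: bij_betw_def inj_on_def)
      then have "t = t'" using \<open>\<theta> x y t = \<theta> x y' t'\<close> cocycle_bij[OF x ab(3)] ab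
        by (auto simp: bij_betw_def inj_on_def)
      then show "a = b" using ab \<open>y = y'\<close> by simp
    qed
    show "ext_L x ` (Q \<times> S) = Q \<times> S"
    proof
      show "ext_L x ` (Q \<times> S) \<subseteq> Q \<times> S" using x by (auto simp: ext_L_def op_closed cocycle_closed)
      show "Q \<times> S \<subseteq> ext_L x ` (Q \<times> S)"
      proof
        fix e assume "e \<in> Q \<times> S"
        then obtain z t where e: "e = (z, t)" "z \<in> Q" "t \<in> S" by auto
        let ?u = "inv_into Q (op x) z"
        have u: "?u \<in> Q" "op x ?u = z" using op_bij[OF x] e(2) by (auto simp: bij_betw_def inv_into_into f_inv_into_f)
        let ?a = "(?u, inv_into S (\<theta> x ?u) t)"
        have "?a \<in> Q \<times> S" using u cocycle_bij[OF x u(1)] e(3) by (auto simp: bij_betw_def inv_into_into)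
        moreover have "ext_L x ?a = e"
          using u e cocycle_bij[OF x u(1)] calculation by (auto simp: ext_L_apply bij_betw_def f_inv_into_f)
        ultimately show "e \<in> ext_L x ` (Q \<times> S)" by force
      qed
    qed
  qed
  then show ?thesis by (simp add: Bij_def ext_L_def)
qed

lemma ext_L_carrier: "x \<in> Q \<Longrightarrow> ext_L x \<in> carrier BG"
  using ext_L_Bij BG_carrier by simp

lemma inv_ext_L_apply:
  assumes x: "x \<in> Q" and y: "y \<in> Q" and t: "t \<in> S"
  defines "u \<equiv> inv_into Q (op x) y"
  shows "(inv\<^bsub>BG\<^esub> (ext_L x)) (y, t) = (u, inv_into S (\<theta> x u) t)"
proof (rule BG_inv_apply[OF ext_L_Bij[OF x]])
  have u: "u \<in> Q" "op x u = y"
    using op_bij[OF x] y by (auto simp: u_def bij_betw_def inv_into_into f_inv_into_f)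
  show "(u, inv_into S (\<theta> x u) t) \<in> Q \<times> S"
    using u cocycle_bij[OF x u(1)] t by (auto simp: bij_betw_def inv_into_into)
  then show "ext_L x (u, inv_into S (\<theta> x u) t) = (y, t)"
    using u cocycle_bij[OF x u(1)] t by (auto simp: ext_L_apply bij_betw_def f_inv_into_f)
qed

lemma ext_L_commute:
  assumes x: "x \<in> Q" and y: "y \<in> Q"
  shows "ext_L x \<otimes>\<^bsub>BG\<^esub> ext_L y = ext_L (op x y) \<otimes>\<^bsub>BG\<^esub> ext_L x"
proof (rule BG_eqI)
  show "ext_L x \<otimes>\<^bsub>BG\<^esub> ext_L y \<in> Bij (Q \<times> S)" "ext_L (op x y) \<otimes>\<^bsub>BG\<^esub> ext_L x \<in> Bij (Q \<times> S)"
    using ext_L_carrier x y op_closed BG_carrier B.m_closed by metis+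
  fix e assume "e \<in> Q \<times> S"
  then obtain z t where e: "e = (z, t)" "z \<in> Q" "t \<in> S" by auto
  show "(ext_L x \<otimes>\<^bsub>BG\<^esub> ext_L y) e = (ext_L (op x y) \<otimes>\<^bsub>BG\<^esub> ext_L x) e"
    using x y e op_self_distrib[OF x y e(2)] cocycle_eq[OF x y e(2,3)]
    by (simp add: BG_mult_apply ext_L_Bij op_closed ext_L_apply cocycle_closed)
qed

lemma base_closed: "\<phi> \<in> Bij (Q \<times> S) \<Longrightarrow> y \<in> Q \<Longrightarrow> base \<phi> y \<in> Q"
  unfolding base_def using Bij_closed[of \<phi> "(y, s0)"] s0 by auto

lemma base_one: "y \<in> Q \<Longrightarrow> base \<one>\<^bsub>BG\<^esub> y = y"
  unfolding base_def using s0 BG_one_apply by simp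

lemma base_ext_L: "x \<in> Q \<Longrightarrow> y \<in> Q \<Longrightarrow> base (ext_L x) y = op x y"
  unfolding base_def using s0 by (simp add: ext_L_apply)

lemma base_inv_ext_L: "x \<in> Q \<Longrightarrow> y \<in> Q \<Longrightarrow> base (inv\<^bsub>BG\<^esub> (ext_L x)) y = inv_into Q (op x) y"
  unfolding base_def using s0 by (simp add: inv_ext_L_apply)

lemma fibred_Bij: "fibred \<phi> \<Longrightarrow> \<phi> \<in> Bij (Q \<times> S)"
  by (simp add: fibred_def)

lemma fibred_carrier: "fibred \<phi> \<Longrightarrow> \<phi> \<in> carrier BG"
  by (simp add: fibred_def BG_carrier)

lemma fibred_apply:
  assumes "fibred \<phi>" "y \<in> Q" "t \<in> S"
  shows "\<phi> (y, t) = (base \<phi> y, snd (\<phi> (y, t)))" "snd (\<phi> (y, t)) \<in> S"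
  using assms Bij_closed[OF fibred_Bij[OF assms(1)], of "(y, t)"] by (auto simp: fibred_def prod_eq_iff)

lemma fibred_commute: "fibred \<phi> \<Longrightarrow> y \<in> Q \<Longrightarrow> \<phi> \<otimes>\<^bsub>BG\<^esub> ext_L y = ext_L (base \<phi> y) \<otimes>\<^bsub>BG\<^esub> \<phi>"
  by (simp add: fibred_def)

lemma fibred_one: "fibred \<one>\<^bsub>BG\<^esub>"
  unfolding fibred_def using B.one_closed BG_carrier base_one BG_one_apply ext_L_carrier by simp

lemma fibred_ext_L: "x \<in> Q \<Longrightarrow> fibred (ext_L x)"
  unfolding fibred_def using ext_L_Bij base_ext_L ext_L_apply ext_L_commute by simp

lemma fibred_inv_ext_L:
  assumes x: "x \<in> Q"
  shows "fibred (inv\<^bsub>BG\<^esub> (ext_L x))"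
proof -
  have L: "ext_L x \<in> carrier BG" using ext_L_carrier x .
  have "inv\<^bsub>BG\<^esub> (ext_L x) \<otimes>\<^bsub>BG\<^esub> ext_L y = ext_L (inv_into Q (op x) y) \<otimes>\<^bsub>BG\<^esub> inv\<^bsub>BG\<^esub> (ext_L x)"
    if y: "y \<in> Q" for y
  proof -
    let ?u = "inv_into Q (op x) y"
    have u: "?u \<in> Q" "op x ?u = y" using op_bij[OF x] y by (auto simp: bij_betw_def inv_into_into f_inv_into_f)
    have "ext_L x \<otimes>\<^bsub>BG\<^esub> ext_L ?u = ext_L y \<otimes>\<^bsub>BG\<^esub> ext_L x" using ext_L_commute[OF x u(1)] u(2) by simp
    then have "inv\<^bsub>BG\<^esub> (ext_L x) \<otimes>\<^bsub>BG\<^esub> (ext_L x \<otimes>\<^bsub>BG\<^esub> ext_L ?u) \<otimes>\<^bsub>BG\<^esub> inv\<^bsub>BG\<^esub> (ext_L x)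
        = inv\<^bsub>BG\<^esub> (ext_L x) \<otimes>\<^bsub>BG\<^esub> (ext_L y \<otimes>\<^bsub>BG\<^esub> ext_L x) \<otimes>\<^bsub>BG\<^esub> inv\<^bsub>BG\<^esub> (ext_L x)"
      by simp
    then show ?thesis using L ext_L_carrier[OF y] ext_L_carrier[OF u(1)] by (simp add: B.m_assoc)
  qed
  moreover have "inv\<^bsub>BG\<^esub> (ext_L x) \<in> Bij (Q \<times> S)" using L BG_carrier B.inv_closed by metis
  ultimately show ?thesis unfolding fibred_def using x base_inv_ext_L inv_ext_L_apply by simp
qed

lemma base_mult:
  assumes "fibred \<phi>" "fibred \<psi>" "y \<in> Q"
  shows "base (\<phi> \<otimes>\<^bsub>BG\<^esub> \<psi>) y = base \<phi> (base \<psi> y)"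
  and "t \<in> S \<Longrightarrow> fst ((\<phi> \<otimes>\<^bsub>BG\<^esub> \<psi>) (y, t)) = base \<phi> (base \<psi> y)"
proof -
  have *: "fst ((\<phi> \<otimes>\<^bsub>BG\<^esub> \<psi>) (y, t)) = base \<phi> (base \<psi> y)" if t: "t \<in> S" for t
  proof -
    have "(\<phi> \<otimes>\<^bsub>BG\<^esub> \<psi>) (y, t) = \<phi> (base \<psi> y, snd (\<psi> (y, t)))"
      using BG_mult_apply fibred_Bij assms t fibred_apply(1)[OF assms(2)] by simp
    then show ?thesis
      using fibred_apply[OF assms(1) base_closed[OF fibred_Bij[OF assms(2)] assms(3)]]
        fibred_apply(2)[OF assms(2,3) t] by (metis fst_conv)
  qed
  then show "base (\<phi> \<otimes>\<^bsub>BG\<^esub> \<psi>) y = base \<phi> (base \<psi> y)" using s0 by (simp add: base_def)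
  show "t \<in> S \<Longrightarrow> fst ((\<phi> \<otimes>\<^bsub>BG\<^esub> \<psi>) (y, t)) = base \<phi> (base \<psi> y)" by (rule *)
qed

lemma fibred_mult:
  assumes \<phi>: "fibred \<phi>" and \<psi>: "fibred \<psi>"
  shows "fibred (\<phi> \<otimes>\<^bsub>BG\<^esub> \<psi>)"
proof -
  have c: "\<phi> \<in> carrier BG" "\<psi> \<in> carrier BG" using \<phi> \<psi> fibred_carrier by auto
  have "(\<phi> \<otimes>\<^bsub>BG\<^esub> \<psi>) \<otimes>\<^bsub>BG\<^esub> ext_L y = ext_L (base (\<phi> \<otimes>\<^bsub>BG\<^esub> \<psi>) y) \<otimes>\<^bsub>BG\<^esub> (\<phi> \<otimes>\<^bsub>BG\<^esub> \<psi>)"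
    if y: "y \<in> Q" for y
  proof -
    have y': "base \<psi> y \<in> Q" using base_closed[OF fibred_Bij[OF \<psi>] y] .
    have "(\<phi> \<otimes>\<^bsub>BG\<^esub> \<psi>) \<otimes>\<^bsub>BG\<^esub> ext_L y = \<phi> \<otimes>\<^bsub>BG\<^esub> (ext_L (base \<psi> y) \<otimes>\<^bsub>BG\<^esub> \<psi>)"
      using c ext_L_carrier[OF y] fibred_commute[OF \<psi> y] by (simp add: B.m_assoc)
    also have "\<dots> = ext_L (base \<phi> (base \<psi> y)) \<otimes>\<^bsub>BG\<^esub> (\<phi> \<otimes>\<^bsub>BG\<^esub> \<psi>)"
      using c fibred_commute[OF \<phi> y'] ext_L_carrier[OF y'] ext_L_carrier[OF base_closed[OF fibred_Bij[OF \<phi>] y']]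
      by (simp add: B.m_assoc [symmetric])
    finally show ?thesis using base_mult(1)[OF \<phi> \<psi> y] by simp
  qed
  moreover have "\<phi> \<otimes>\<^bsub>BG\<^esub> \<psi> \<in> Bij (Q \<times> S)" using c BG_carrier B.m_closed by metis
  ultimately show ?thesis unfolding fibred_def using base_mult[OF \<phi> \<psi>] by simp
qed

lemma ext_L_Ext_Inn: "x \<in> Q \<Longrightarrow> ext_L x \<in> Ext_Inn"
  unfolding Ext_Inn_def by (rule generate.incl) simp

lemma Ext_Inn_subgroup: "subgroup Ext_Inn BG"
  unfolding Ext_Inn_def using B.generate_is_subgroup ext_L_carrier by blast

lemma generate_fibred:
  assumes "H \<subseteq> Q" "\<phi> \<in> generate BG (ext_L ` H)"
  shows "fibred \<phi>"
  using assms(2)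
proof (induct \<phi> rule: generate.induct)
  case one then show ?case using fibred_one .
next
  case (incl h) then show ?case using fibred_ext_L assms(1) by blast
next
  case (inv h) then show ?case using fibred_inv_ext_L assms(1) by blast
next
  case (eng h1 h2) then show ?case using fibred_mult by blast
qed

lemma Ext_Inn_fibred: "\<phi> \<in> Ext_Inn \<Longrightarrow> fibred \<phi>"
  unfolding Ext_Inn_def using generate_fibred by blast

lemma Ext_Inn_carrier: "\<phi> \<in> Ext_Inn \<Longrightarrow> \<phi> \<in> carrier BG"
  using Ext_Inn_fibred fibred_carrier by blast

lemma Ext_Inn_inv: "\<phi> \<in> Ext_Inn \<Longrightarrow> inv\<^bsub>BG\<^esub> \<phi> \<in> Ext_Inn"
  using subgroup.m_inv_closed[OF Ext_Inn_subgroup] .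

lemma Ext_Inn_mult: "\<phi> \<in> Ext_Inn \<Longrightarrow> \<psi> \<in> Ext_Inn \<Longrightarrow> \<phi> \<otimes>\<^bsub>BG\<^esub> \<psi> \<in> Ext_Inn"
  using subgroup.m_closed[OF Ext_Inn_subgroup] .

lemma base_inv:
  assumes \<phi>: "\<phi> \<in> Ext_Inn" and y: "y \<in> Q"
  shows "base (inv\<^bsub>BG\<^esub> \<phi>) (base \<phi> y) = y" "base \<phi> (base (inv\<^bsub>BG\<^esub> \<phi>) y) = y"
  using base_mult(1)[OF Ext_Inn_fibred[OF Ext_Inn_inv[OF \<phi>]] Ext_Inn_fibred[OF \<phi>] y]
    base_mult(1)[OF Ext_Inn_fibred[OF \<phi>] Ext_Inn_fibred[OF Ext_Inn_inv[OF \<phi>]] y]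
    base_one[OF y] B.l_inv[OF Ext_Inn_carrier[OF \<phi>]] B.r_inv[OF Ext_Inn_carrier[OF \<phi>]]
  by simp_all

lemma conj_ext_L:
  assumes \<phi>: "fibred \<phi>" and y: "y \<in> Q"
  shows "\<phi> \<otimes>\<^bsub>BG\<^esub> ext_L y \<otimes>\<^bsub>BG\<^esub> inv\<^bsub>BG\<^esub> \<phi> = ext_L (base \<phi> y)"
  using fibred_commute[OF \<phi> y] fibred_carrier[OF \<phi>] ext_L_carrier[OF y]
    ext_L_carrier[OF base_closed[OF fibred_Bij[OF \<phi>] y]]
  by (simp add: B.m_assoc)

lemma commute_if_base_id:
  assumes \<kappa>: "\<kappa> \<in> Ext_Inn" and id: "\<forall>y\<in>Q. base \<kappa> y = y" and \<psi>: "\<psi> \<in> Ext_Inn"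
  shows "\<kappa> \<otimes>\<^bsub>BG\<^esub> \<psi> = \<psi> \<otimes>\<^bsub>BG\<^esub> \<kappa>"
proof -
  have "\<forall>l\<in>ext_L ` Q. \<kappa> \<otimes>\<^bsub>BG\<^esub> l = l \<otimes>\<^bsub>BG\<^esub> \<kappa>"
    using fibred_commute[OF Ext_Inn_fibred[OF \<kappa>]] id by auto
  then show ?thesis
    using B.commute_generate[OF Ext_Inn_carrier[OF \<kappa>]] ext_L_carrier \<psi> unfolding Ext_Inn_def by blast
qed

lemma inv_into_subquandle:
  assumes H: "quandle H op" "H \<subseteq> Q" and x: "x \<in> H" and w: "w \<in> H"
  shows "inv_into Q (op x) w = inv_into H (op x) w"
proof (rule inv_into_f_eq)
  have b: "bij_betw (op x) H H" using H(1) x by (simp add: quandle_def)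
  show "inj_on (op x) Q" using op_bij x H(2) by (auto simp: bij_betw_def)
  show "inv_into H (op x) w \<in> Q" using b w H(2) by (auto simp: bij_betw_def inv_into_into)
  show "op x (inv_into H (op x) w) = w" using b w by (simp add: bij_betw_def f_inv_into_f)
qed

lemma lift_inn_gen:
  assumes H: "quandle H op" "H \<subseteq> Q" and g: "g \<in> inn_gen H op"
  shows "\<exists>W\<in>generate BG (ext_L ` H). \<forall>z\<in>H. base W z = g z"
  using g
proof (induct g rule: inn_gen.induct)
  case id_in
  have "\<forall>z\<in>H. base \<one>\<^bsub>BG\<^esub> z = id z" using base_one H(2) by auto
  then show ?case using generate.one by blast
next
  case (L_in g x)
  then obtain W where W: "W \<in> generate BG (ext_L ` H)" "\<forall>z\<in>H. base W z = g z" by blast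
  have "ext_L x \<otimes>\<^bsub>BG\<^esub> W \<in> generate BG (ext_L ` H)"
    using generate.eng[OF generate.incl W(1)] L_in(3) by blast
  moreover have "\<forall>z\<in>H. base (ext_L x \<otimes>\<^bsub>BG\<^esub> W) z = (op x \<circ> g) z"
    using base_mult(1)[OF fibred_ext_L generate_fibred[OF H(2) W(1)]] W(2) L_in(3) subsetD[OF H(2)]
      base_ext_L inn_gen_closed[OF H(1) L_in(1)] by auto
  ultimately show ?case by blast
next
  case (Linv_in g x)
  then obtain W where W: "W \<in> generate BG (ext_L ` H)" "\<forall>z\<in>H. base W z = g z" by blast
  have "inv\<^bsub>BG\<^esub> (ext_L x) \<otimes>\<^bsub>BG\<^esub> W \<in> generate BG (ext_L ` H)"
    using generate.eng[OF generate.inv W(1)] Linv_in(3) by blast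
  moreover have "\<forall>z\<in>H. base (inv\<^bsub>BG\<^esub> (ext_L x) \<otimes>\<^bsub>BG\<^esub> W) z = (inv_into H (op x) \<circ> g) z"
    using base_mult(1)[OF fibred_inv_ext_L generate_fibred[OF H(2) W(1)]] W(2) Linv_in(3) H subsetD[OF H(2)]
      base_inv_ext_L inn_gen_closed[OF H(1) Linv_in(1)] inv_into_subquandle by auto
  ultimately show ?case by blast
qed

context
  fixes H and \<gamma> :: "'a \<Rightarrow> 's \<Rightarrow> 's"
  assumes subquandle: "quandle H op" "H \<subseteq> Q"
    and \<gamma>_bij: "\<forall>x\<in>H. bij_betw (\<gamma> x) S S"
    and trivialises: "\<forall>x\<in>H. \<forall>y\<in>H. \<forall>s\<in>S. \<theta> x y s = \<gamma> (op x y) (inv_into S (\<gamma> y) s)"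
begin

lemma \<gamma>_closed: "z \<in> H \<Longrightarrow> t \<in> S \<Longrightarrow> \<gamma> z t \<in> S"
  using \<gamma>_bij bij_betwE by blast

lemma ext_L_trivialised:
  assumes "a \<in> H" "z \<in> H" "t \<in> S"
  shows "ext_L a (z, \<gamma> z t) = (op a z, \<gamma> (op a z) t)"
  using ext_L_apply[OF _ \<gamma>_closed] trivialises \<gamma>_bij \<gamma>_closed assms subsetD[OF subquandle(2)]
  by (auto simp: bij_betw_def inv_into_f_f)

lemma inv_ext_L_trivialised:
  assumes a: "a \<in> H" and z: "z \<in> H" and t: "t \<in> S"
  defines "w \<equiv> inv_into H (op a) z"
  shows "w \<in> H" "base (inv\<^bsub>BG\<^esub> (ext_L a)) z = w" "(inv\<^bsub>BG\<^esub> (ext_L a)) (z, \<gamma> z t) = (w, \<gamma> w t)"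
proof -
  note HQ = subsetD[OF subquandle(2)]
  have w: "w \<in> H" "op a w = z"
    using subquandle(1) a z by (auto simp: w_def quandle_def bij_betw_def inv_into_into f_inv_into_f)
  then show "w \<in> H" by simp
  show "base (inv\<^bsub>BG\<^esub> (ext_L a)) z = w"
    using base_inv_ext_L[OF HQ HQ] inv_into_subquandle[OF subquandle] a z by (simp add: w_def)
  show "(inv\<^bsub>BG\<^esub> (ext_L a)) (z, \<gamma> z t) = (w, \<gamma> w t)"
    using BG_inv_apply[OF ext_L_Bij] ext_L_trivialised[OF a w(1) t] w a \<gamma>_closed[OF w(1) t] HQ by auto
qed

lemma ext_action_trivialised:
  assumes "W \<in> generate BG (ext_L ` H)"
  shows "\<forall>z\<in>H. \<forall>t\<in>S. base W z \<in> H \<and> W (z, \<gamma> z t) = (base W z, \<gamma> (base W z) t)"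
  using assms
proof (induct W rule: generate.induct)
  case one then show ?case using base_one subquandle(2) BG_one_apply \<gamma>_closed by auto
next
  case (incl h)
  then show ?case
    using ext_L_trivialised base_ext_L subsetD[OF subquandle(2)] subquandle(1) by (auto simp: quandle_def)
next
  case (inv h) then show ?case using inv_ext_L_trivialised by auto
next
  case (eng h1 h2)
  have f: "fibred h1" "fibred h2" using eng generate_fibred subquandle(2) by auto
  show ?case
  proof (intro ballI conjI)
    fix z t assume z: "z \<in> H" and t: "t \<in> S"
    have h2z: "base h2 z \<in> H" "h2 (z, \<gamma> z t) = (base h2 z, \<gamma> (base h2 z) t)" using eng(4) z t by auto
    have h1z: "base h1 (base h2 z) \<in> H"
      "h1 (base h2 z, \<gamma> (base h2 z) t) = (base h1 (base h2 z), \<gamma> (base h1 (base h2 z)) t)"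
      using eng(2) h2z(1) t by auto
    have b: "base (h1 \<otimes>\<^bsub>BG\<^esub> h2) z = base h1 (base h2 z)" using base_mult(1)[OF f] z subquandle(2) by auto
    then show "base (h1 \<otimes>\<^bsub>BG\<^esub> h2) z \<in> H" using h1z by simp
    have "(h1 \<otimes>\<^bsub>BG\<^esub> h2) (z, \<gamma> z t) = h1 (h2 (z, \<gamma> z t))"
      using BG_mult_apply fibred_Bij f z t \<gamma>_closed subquandle(2) by auto
    then show "(h1 \<otimes>\<^bsub>BG\<^esub> h2) (z, \<gamma> z t) = (base (h1 \<otimes>\<^bsub>BG\<^esub> h2) z, \<gamma> (base (h1 \<otimes>\<^bsub>BG\<^esub> h2) z) t)"
      using h2z h1z b by simp
  qed
qed

end

lemma fixes_fibre_if_trivial: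
  assumes H: "quandle H op" "H \<subseteq> Q" and triv: "cohomologous_trivial H op S \<theta>"
    and W: "W \<in> generate BG (ext_L ` H)" and z: "z \<in> H" "base W z = z" and t: "t \<in> S"
  shows "W (z, t) = (z, t)"
proof -
  obtain \<gamma> where \<gamma>: "\<forall>x\<in>H. bij_betw (\<gamma> x) S S"
    and eq: "\<forall>x\<in>H. \<forall>y\<in>H. \<forall>s\<in>S. \<theta> x y s = \<gamma> (op x y) (inv_into S (\<gamma> y) s)"
    using triv by (auto simp: cohomologous_trivial_def)
  let ?s = "inv_into S (\<gamma> z) t"
  have s: "?s \<in> S" "\<gamma> z ?s = t" using \<gamma> z(1) t by (auto simp: bij_betw_def inv_into_into f_inv_into_f)
  show ?thesis using ext_action_trivialised[OF H \<gamma> eq W] z s by force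
qed

lemma Ext_Inn_transitive:
  assumes conn: "quandle_connected Q op" and x: "x \<in> Q" and y: "y \<in> Q"
  shows "\<exists>W\<in>Ext_Inn. base W x = y"
proof -
  obtain g where "g \<in> inn_gen Q op" "g x = y" using conn x y by (auto simp: quandle_connected_def)
  then show ?thesis using lift_inn_gen[OF quandle subset_refl] x unfolding Ext_Inn_def by blast
qed

lemma fibre_map_bij:
  assumes W: "W \<in> Ext_Inn" and x: "x \<in> Q"
  shows "bij_betw (\<lambda>s. snd (W (x, s))) S S"
proof (rule bij_betw_imageI)
  have f: "fibred W" using Ext_Inn_fibred[OF W] .
  have B: "W \<in> Bij (Q \<times> S)" using fibred_Bij[OF f] .
  show "inj_on (\<lambda>s. snd (W (x, s))) S"
  proof (rule inj_onI)
    fix s s' assume s: "s \<in> S" "s' \<in> S" "snd (W (x, s)) = snd (W (x, s'))"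
    then have "W (x, s) = W (x, s')" using fibred_apply(1)[OF f x] by metis
    then show "s = s'" using B s x by (auto simp: Bij_def bij_betw_def inj_on_def)
  qed
  show "(\<lambda>s. snd (W (x, s))) ` S = S"
  proof
    show "(\<lambda>s. snd (W (x, s))) ` S \<subseteq> S" using fibred_apply(2)[OF f x] by blast
    show "S \<subseteq> (\<lambda>s. snd (W (x, s))) ` S"
    proof
      fix t assume t: "t \<in> S"
      have "(base W x, t) \<in> W ` (Q \<times> S)"
        using B base_closed[OF B x] t by (auto simp: Bij_def bij_betw_def)
      then obtain z s where zs: "z \<in> Q" "s \<in> S" "W (z, s) = (base W x, t)" by auto
      then have "base W z = base W x" using fibred_apply(1)[OF f zs(1,2)] by simp
      then have "z = x" using base_inv(1)[OF W zs(1)] base_inv(1)[OF W x] by metis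
      then show "t \<in> (\<lambda>s. snd (W (x, s))) ` S" using zs by force
    qed
  qed
qed

context
  fixes q0 assumes q0: "q0 \<in> Q"
    and stabilizer_fixes: "\<And>\<phi> t. \<phi> \<in> Ext_Inn \<Longrightarrow> base \<phi> q0 = q0 \<Longrightarrow> t \<in> S \<Longrightarrow> \<phi> (q0, t) = (q0, t)"
begin

lemma fibre_map_unique:
  assumes V: "V \<in> Ext_Inn" and W: "W \<in> Ext_Inn" and eq: "base V q0 = base W q0" and s: "s \<in> S"
  shows "V (q0, s) = W (q0, s)"
proof -
  let ?U = "inv\<^bsub>BG\<^esub> W \<otimes>\<^bsub>BG\<^esub> V"
  have U: "?U \<in> Ext_Inn" using Ext_Inn_mult[OF Ext_Inn_inv[OF W] V] .
  have "base ?U q0 = base (inv\<^bsub>BG\<^esub> W) (base W q0)"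
    using base_mult(1)[OF Ext_Inn_fibred[OF Ext_Inn_inv[OF W]] Ext_Inn_fibred[OF V] q0] eq by simp
  also have "\<dots> = q0" using base_inv(1)[OF W q0] .
  finally have "?U (q0, s) = (q0, s)" using stabilizer_fixes[OF U _ s] by simp
  moreover have "W \<otimes>\<^bsub>BG\<^esub> ?U = V"
    using Ext_Inn_carrier V W by (simp add: B.m_assoc [symmetric])
  moreover have "(W \<otimes>\<^bsub>BG\<^esub> ?U) (q0, s) = W (?U (q0, s))"
    using BG_mult_apply fibred_Bij Ext_Inn_fibred W U q0 s by simp
  ultimately show ?thesis by simp
qed

lemma cohomologous_trivial_if_connected:
  assumes conn: "quandle_connected Q op"
  shows "cohomologous_trivial Q op S \<theta>"
proof -
  define W where "W y = (SOME W. W \<in> Ext_Inn \<and> base W q0 = y)" for y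
  have W: "W y \<in> Ext_Inn" "base (W y) q0 = y" if "y \<in> Q" for y
    using someI_ex[OF Ext_Inn_transitive[OF conn q0 that, unfolded Bex_def]] unfolding W_def by auto
  define \<gamma> where "\<gamma> y s = snd (W y (q0, s))" for y s
  have W_apply: "W y (q0, s) = (y, \<gamma> y s)" if "y \<in> Q" "s \<in> S" for y s
    using fibred_apply(1)[OF Ext_Inn_fibred[OF W(1)[OF that(1)]] q0 that(2)] W(2)[OF that(1)]
    unfolding \<gamma>_def by simp
  have \<gamma>_bij: "bij_betw (\<gamma> y) S S" if "y \<in> Q" for y
    using fibre_map_bij[OF W(1)[OF that] q0] unfolding \<gamma>_def .
  have "\<theta> x y s = \<gamma> (op x y) (inv_into S (\<gamma> y) s)" if x: "x \<in> Q" and y: "y \<in> Q" and s: "s \<in> S" for x y s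
  proof -
    let ?s = "inv_into S (\<gamma> y) s"
    have s': "?s \<in> S" "\<gamma> y ?s = s"
      using \<gamma>_bij[OF y] s by (auto simp: bij_betw_def inv_into_into f_inv_into_f)
    have xy: "op x y \<in> Q" using op_closed[OF x y] .
    have V: "ext_L x \<otimes>\<^bsub>BG\<^esub> W y \<in> Ext_Inn" using Ext_Inn_mult[OF ext_L_Ext_Inn[OF x] W(1)[OF y]] .
    have "base (ext_L x \<otimes>\<^bsub>BG\<^esub> W y) q0 = base (W (op x y)) q0"
      using base_mult(1)[OF fibred_ext_L[OF x] Ext_Inn_fibred[OF W(1)[OF y]] q0] W(2)[OF y] W(2)[OF xy]
        base_ext_L[OF x y] by simp
    then have "(ext_L x \<otimes>\<^bsub>BG\<^esub> W y) (q0, ?s) = (op x y, \<gamma> (op x y) ?s)"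
      using fibre_map_unique[OF V W(1)[OF xy] _ s'(1)] W_apply[OF xy s'(1)] by simp
    moreover have "(ext_L x \<otimes>\<^bsub>BG\<^esub> W y) (q0, ?s) = (op x y, \<theta> x y s)"
      using BG_mult_apply[OF ext_L_Bij[OF x] fibred_Bij[OF Ext_Inn_fibred[OF W(1)[OF y]]]] q0 s'
        W_apply[OF y s'(1)] ext_L_apply[OF y s] by simp
    ultimately show ?thesis by simp
  qed
  then show ?thesis unfolding cohomologous_trivial_def using \<gamma>_bij by blast
qed

end

end

section \<open>Cocycles on \<open>Q(G,f)\<close> for nilpotent \<open>G\<close>\<close>

locale nilpotent_qop_extension =
  nilpotent_group_aut G f + quandle_extension "carrier G" "qop G f" S \<theta> s0
  for G (structure) and f and S :: "'s set" and \<theta> and s0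
begin

definition "translates \<phi> c \<longleftrightarrow> (\<forall>z\<in>carrier G. base \<phi> z = c \<otimes> z)"

definition "ext_diff x y = ext_L x \<otimes>\<^bsub>BG\<^esub> inv\<^bsub>BG\<^esub> (ext_L y)"

definition "Syl_diffs p = {ext_diff x y | x y. x \<in> carrier G \<and> y \<in> carrier G \<and> inv x \<otimes> y \<in> Syl p}"

definition "Sdiff p = generate BG (Syl_diffs p)"

lemma ext_diff_Ext_Inn: "x \<in> carrier G \<Longrightarrow> y \<in> carrier G \<Longrightarrow> ext_diff x y \<in> Ext_Inn"
  unfolding ext_diff_def using Ext_Inn_mult Ext_Inn_inv ext_L_Ext_Inn by blast

lemma ext_diff_carrier: "x \<in> carrier G \<Longrightarrow> y \<in> carrier G \<Longrightarrow> ext_diff x y \<in> carrier BG"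
  using ext_diff_Ext_Inn Ext_Inn_carrier by blast

lemma ext_diff_trans:
  "a \<in> carrier G \<Longrightarrow> b \<in> carrier G \<Longrightarrow> c \<in> carrier G \<Longrightarrow> ext_diff a b \<otimes>\<^bsub>BG\<^esub> ext_diff b c = ext_diff a c"
  unfolding ext_diff_def using ext_L_carrier by (simp add: B.m_assoc)

lemma ext_diff_mult_ext_L: "x \<in> carrier G \<Longrightarrow> y \<in> carrier G \<Longrightarrow> ext_diff x y \<otimes>\<^bsub>BG\<^esub> ext_L y = ext_L x"
  unfolding ext_diff_def using ext_L_carrier by (simp add: B.m_assoc)

lemma translates_ext_diff:
  assumes x: "x \<in> carrier G" and y: "y \<in> carrier G"
  shows "translates (ext_diff x y) (x \<otimes> f (inv x \<otimes> y) \<otimes> inv y)"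
  unfolding translates_def ext_diff_def
  using base_mult(1)[OF fibred_ext_L[OF x] fibred_inv_ext_L[OF y]] base_ext_L[OF x] base_inv_ext_L[OF y]
    inv_into_qop[OF invariant_subgroup_carrier y] qop_Linv_eq_mult[OF x y] Linv_closed[OF y]
  by simp

lemma ext_diff_translation_Syl:
  assumes p: "p \<in> order_primes" and x: "x \<in> carrier G" and y: "y \<in> carrier G"
    and u: "inv x \<otimes> y \<in> Syl p"
  shows "x \<otimes> f (inv x \<otimes> y) \<otimes> inv y \<in> Syl p"
proof -
  let ?u = "inv x \<otimes> y"
  have uc: "?u \<in> carrier G" using x y by simp
  have "f ?u \<otimes> inv ?u \<in> Syl p"
    using hom_Syl[OF f.homh p u] subgroup.m_closed[OF subgroup_Syl[OF p]]
      subgroup.m_inv_closed[OF subgroup_Syl[OF p] u] by blast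
  then have "x \<otimes> (f ?u \<otimes> inv ?u) \<otimes> inv x \<in> Syl p"
    using normal.inv_op_closed2[OF Syl_normal[OF p] x] by blast
  moreover have "x \<otimes> (f ?u \<otimes> inv ?u) \<otimes> inv x = x \<otimes> f ?u \<otimes> inv y"
    using x y uc by (simp add: m_assoc inv_mult_group)
  ultimately show ?thesis by simp
qed

lemma Syl_diffs_Ext_Inn: "Syl_diffs p \<subseteq> Ext_Inn"
  unfolding Syl_diffs_def using ext_diff_Ext_Inn by blast

lemma Sdiff_subgroup: "subgroup (Sdiff p) BG"
  unfolding Sdiff_def using B.generate_is_subgroup Syl_diffs_Ext_Inn Ext_Inn_carrier by blast

lemma Sdiff_Ext_Inn: "Sdiff p \<subseteq> Ext_Inn"
  unfolding Sdiff_def using B.generate_subgroup_incl[OF Syl_diffs_Ext_Inn Ext_Inn_subgroup] .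

lemma Sdiff_carrier: "\<alpha> \<in> Sdiff p \<Longrightarrow> \<alpha> \<in> carrier BG"
  using Sdiff_Ext_Inn Ext_Inn_carrier by blast

lemma ext_diff_Sdiff:
  "x \<in> carrier G \<Longrightarrow> y \<in> carrier G \<Longrightarrow> inv x \<otimes> y \<in> Syl p \<Longrightarrow> ext_diff x y \<in> Sdiff p"
  unfolding Sdiff_def Syl_diffs_def by (intro generate.incl) blast

lemma translates_mult:
  assumes "\<phi> \<in> Ext_Inn" "\<psi> \<in> Ext_Inn" "translates \<phi> c" "translates \<psi> d" "c \<in> carrier G" "d \<in> carrier G"
  shows "translates (\<phi> \<otimes>\<^bsub>BG\<^esub> \<psi>) (c \<otimes> d)"
  using base_mult(1)[OF Ext_Inn_fibred Ext_Inn_fibred] assms by (simp add: translates_def m_assoc)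

lemma translates_inv:
  assumes \<phi>: "\<phi> \<in> Ext_Inn" "translates \<phi> c" and c: "c \<in> carrier G"
  shows "translates (inv\<^bsub>BG\<^esub> \<phi>) (inv c)"
  unfolding translates_def
proof
  fix z assume z: "z \<in> carrier G"
  have bz: "base (inv\<^bsub>BG\<^esub> \<phi>) z \<in> carrier G"
    using base_closed fibred_Bij Ext_Inn_fibred Ext_Inn_inv \<phi>(1) z by blast
  have "c \<otimes> base (inv\<^bsub>BG\<^esub> \<phi>) z = z" using base_inv(2)[OF \<phi>(1) z] \<phi>(2) bz by (simp add: translates_def)
  then show "base (inv\<^bsub>BG\<^esub> \<phi>) z = inv c \<otimes> z" using c bz z by (metis inv_mult_cancel_left)
qed

lemma translates_pow:
  assumes "\<phi> \<in> Ext_Inn" "translates \<phi> c" "c \<in> carrier G"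
  shows "translates (\<phi> [^]\<^bsub>BG\<^esub> (n::nat)) (c [^] n)"
proof (induct n)
  case 0 then show ?case using base_one by (simp add: translates_def)
next
  case (Suc n)
  have "\<phi> [^]\<^bsub>BG\<^esub> n \<in> Ext_Inn" using B.subgroup_nat_pow_closed[OF Ext_Inn_subgroup assms(1)] .
  then show ?case using translates_mult[OF _ assms(1) Suc assms(2) _ assms(3)] assms(3) by simp
qed

lemma Sdiff_translates:
  assumes p: "p \<in> order_primes" and \<alpha>: "\<alpha> \<in> Sdiff p"
  shows "\<exists>c\<in>Syl p. translates \<alpha> c"
  using \<alpha> unfolding Sdiff_def
proof (induct \<alpha> rule: generate.induct)
  case one
  have "translates \<one>\<^bsub>BG\<^esub> \<one>" using base_one by (simp add: translates_def)
  then show ?case using one_Syl[OF p] by blast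
next
  case (incl h)
  then obtain x y where "h = ext_diff x y" "x \<in> carrier G" "y \<in> carrier G" "inv x \<otimes> y \<in> Syl p"
    by (auto simp: Syl_diffs_def)
  then show ?case using translates_ext_diff ext_diff_translation_Syl[OF p] by blast
next
  case (inv h)
  then obtain x y where h: "h = ext_diff x y" "x \<in> carrier G" "y \<in> carrier G" "inv x \<otimes> y \<in> Syl p"
    by (auto simp: Syl_diffs_def)
  let ?c = "x \<otimes> f (inv x \<otimes> y) \<otimes> inv y"
  have "translates (inv\<^bsub>BG\<^esub> h) (inv ?c)"
    using translates_inv[OF _ translates_ext_diff] ext_diff_Ext_Inn h by simp
  moreover have "inv ?c \<in> Syl p"
    using subgroup.m_inv_closed[OF subgroup_Syl[OF p] ext_diff_translation_Syl[OF p h(2-4)]] .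
  ultimately show ?case by blast
next
  case (eng h1 h2)
  then obtain c1 c2 where c: "c1 \<in> Syl p" "translates h1 c1" "c2 \<in> Syl p" "translates h2 c2" by blast
  have "h1 \<in> Ext_Inn" "h2 \<in> Ext_Inn" using eng Sdiff_Ext_Inn Sdiff_def by auto
  then have "translates (h1 \<otimes>\<^bsub>BG\<^esub> h2) (c1 \<otimes> c2)" using translates_mult c Syl_carrier[OF p] by blast
  moreover have "c1 \<otimes> c2 \<in> Syl p" using subgroup.m_closed[OF subgroup_Syl[OF p]] c by blast
  ultimately show ?case by blast
qed

lemma commute_if_translates_one:
  "\<kappa> \<in> Ext_Inn \<Longrightarrow> translates \<kappa> \<one> \<Longrightarrow> \<psi> \<in> Ext_Inn \<Longrightarrow> \<kappa> \<otimes>\<^bsub>BG\<^esub> \<psi> = \<psi> \<otimes>\<^bsub>BG\<^esub> \<kappa>"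
  using commute_if_base_id by (simp add: translates_def)

lemma pow_sylow_order_Sdiff_commute:
  assumes p: "p \<in> order_primes" and \<alpha>: "\<alpha> \<in> Sdiff p" and \<psi>: "\<psi> \<in> Ext_Inn"
  shows "\<alpha> [^]\<^bsub>BG\<^esub> sylow_order p \<otimes>\<^bsub>BG\<^esub> \<psi> = \<psi> \<otimes>\<^bsub>BG\<^esub> \<alpha> [^]\<^bsub>BG\<^esub> sylow_order p"
proof -
  obtain c where c: "c \<in> Syl p" "translates \<alpha> c" using Sdiff_translates[OF p \<alpha>] by blast
  have "translates (\<alpha> [^]\<^bsub>BG\<^esub> sylow_order p) (c [^] sylow_order p)"
    using translates_pow[OF _ c(2)] Sdiff_Ext_Inn \<alpha> Syl_carrier[OF p c(1)] by blast
  then have "translates (\<alpha> [^]\<^bsub>BG\<^esub> sylow_order p) \<one>"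
    using c(1) mem_Syl_iff[OF p] by simp
  then show ?thesis
    using commute_if_translates_one B.subgroup_nat_pow_closed[OF Ext_Inn_subgroup] Sdiff_Ext_Inn \<alpha> \<psi> by blast
qed

lemma Sdiff_commute:
  assumes p: "p \<in> order_primes" and q: "q \<in> order_primes" and pq: "p \<noteq> q"
    and \<alpha>: "\<alpha> \<in> Sdiff p" and \<beta>: "\<beta> \<in> Sdiff q"
  shows "\<alpha> \<otimes>\<^bsub>BG\<^esub> \<beta> = \<beta> \<otimes>\<^bsub>BG\<^esub> \<alpha>"
proof -
  obtain a where a: "a \<in> Syl p" "translates \<alpha> a" using Sdiff_translates[OF p \<alpha>] by blast
  obtain b where b: "b \<in> Syl q" "translates \<beta> b" using Sdiff_translates[OF q \<beta>] by blast
  have ac: "a \<in> carrier G" and bc: "b \<in> carrier G" using a b Syl_carrier p q by auto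
  have aE: "\<alpha> \<in> Ext_Inn" and bE: "\<beta> \<in> Ext_Inn" using \<alpha> \<beta> Sdiff_Ext_Inn by auto
  have aB: "\<alpha> \<in> carrier BG" and bB: "\<beta> \<in> carrier BG" using aE bE Ext_Inn_carrier by auto
  define \<kappa> where "\<kappa> = \<alpha> \<otimes>\<^bsub>BG\<^esub> \<beta> \<otimes>\<^bsub>BG\<^esub> inv\<^bsub>BG\<^esub> \<alpha> \<otimes>\<^bsub>BG\<^esub> inv\<^bsub>BG\<^esub> \<beta>"
  have \<kappa>E: "\<kappa> \<in> Ext_Inn" unfolding \<kappa>_def using aE bE Ext_Inn_inv Ext_Inn_mult by simp
  have \<kappa>B: "\<kappa> \<in> carrier BG" using \<kappa>E Ext_Inn_carrier by blast
  have "translates \<kappa> (a \<otimes> b \<otimes> inv a \<otimes> inv b)" unfolding \<kappa>_def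
    using translates_mult translates_inv aE bE Ext_Inn_inv Ext_Inn_mult a b ac bc by simp
  moreover have "a \<otimes> b \<otimes> inv a \<otimes> inv b = \<one>" using Syl_commute[OF p q pq a(1) b(1)] ac bc by (simp add: m_assoc)
  ultimately have central: "\<kappa> \<otimes>\<^bsub>BG\<^esub> \<psi> = \<psi> \<otimes>\<^bsub>BG\<^esub> \<kappa>" if "\<psi> \<in> Ext_Inn" for \<psi>
    using commute_if_translates_one[OF \<kappa>E _ that] by simp
  have "\<alpha> \<otimes>\<^bsub>BG\<^esub> \<beta> \<otimes>\<^bsub>BG\<^esub> inv\<^bsub>BG\<^esub> \<alpha> = \<kappa> \<otimes>\<^bsub>BG\<^esub> \<beta>"
    unfolding \<kappa>_def using aB bB by (simp add: B.m_assoc)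
  then have \<kappa>p: "\<kappa> [^]\<^bsub>BG\<^esub> sylow_order p = \<one>\<^bsub>BG\<^esub>"
    using B.pow_eq_one_if_conj_eq_mult[OF aB bB \<kappa>B _ central[OF aE]]
      pow_sylow_order_Sdiff_commute[OF p \<alpha> bE] by blast
  have "\<beta> \<otimes>\<^bsub>BG\<^esub> \<alpha> \<otimes>\<^bsub>BG\<^esub> inv\<^bsub>BG\<^esub> \<beta> = inv\<^bsub>BG\<^esub> \<kappa> \<otimes>\<^bsub>BG\<^esub> \<alpha>"
    unfolding \<kappa>_def using aB bB by (simp add: B.m_assoc B.inv_mult_group)
  moreover have "inv\<^bsub>BG\<^esub> \<kappa> \<otimes>\<^bsub>BG\<^esub> \<beta> = \<beta> \<otimes>\<^bsub>BG\<^esub> inv\<^bsub>BG\<^esub> \<kappa>"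
    using B.commute_inv[OF bB \<kappa>B central[OF bE, symmetric]] by simp
  ultimately have "inv\<^bsub>BG\<^esub> \<kappa> [^]\<^bsub>BG\<^esub> sylow_order q = \<one>\<^bsub>BG\<^esub>"
    using B.pow_eq_one_if_conj_eq_mult[OF bB aB B.inv_closed[OF \<kappa>B]]
      pow_sylow_order_Sdiff_commute[OF q \<beta> aE] by blast
  then have \<kappa>q: "\<kappa> [^]\<^bsub>BG\<^esub> sylow_order q = \<one>\<^bsub>BG\<^esub>"
    using B.nat_pow_inv[OF \<kappa>B] by (metis B.inv_eq_1_iff B.nat_pow_closed \<kappa>B)
  have "\<kappa> = \<one>\<^bsub>BG\<^esub>" using B.pow_eq_one_coprime[OF \<kappa>B \<kappa>p \<kappa>q coprime_sylow_orders[OF p q pq]] .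
  then have "\<alpha> \<otimes>\<^bsub>BG\<^esub> \<beta> \<otimes>\<^bsub>BG\<^esub> inv\<^bsub>BG\<^esub> \<alpha> \<otimes>\<^bsub>BG\<^esub> inv\<^bsub>BG\<^esub> \<beta> \<otimes>\<^bsub>BG\<^esub> \<beta> \<otimes>\<^bsub>BG\<^esub> \<alpha> = \<beta> \<otimes>\<^bsub>BG\<^esub> \<alpha>"
    unfolding \<kappa>_def using aB bB by simp
  then show ?thesis using aB bB by (simp add: B.m_assoc)
qed

lemma conj_ext_diff:
  assumes \<phi>: "fibred \<phi>" and x: "x \<in> carrier G" and y: "y \<in> carrier G"
  shows "\<phi> \<otimes>\<^bsub>BG\<^esub> ext_diff x y \<otimes>\<^bsub>BG\<^esub> inv\<^bsub>BG\<^esub> \<phi> = ext_diff (base \<phi> x) (base \<phi> y)"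
proof -
  have c: "\<phi> \<in> carrier BG" "ext_L x \<in> carrier BG" "ext_L y \<in> carrier BG"
    using fibred_carrier[OF \<phi>] ext_L_carrier x y by auto
  have "\<phi> \<otimes>\<^bsub>BG\<^esub> ext_diff x y \<otimes>\<^bsub>BG\<^esub> inv\<^bsub>BG\<^esub> \<phi> =
      (\<phi> \<otimes>\<^bsub>BG\<^esub> ext_L x \<otimes>\<^bsub>BG\<^esub> inv\<^bsub>BG\<^esub> \<phi>) \<otimes>\<^bsub>BG\<^esub> inv\<^bsub>BG\<^esub> (\<phi> \<otimes>\<^bsub>BG\<^esub> ext_L y \<otimes>\<^bsub>BG\<^esub> inv\<^bsub>BG\<^esub> \<phi>)"
    unfolding ext_diff_def using c by (simp add: B.m_assoc B.inv_mult_group)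
  then show ?thesis using conj_ext_L[OF \<phi> x] conj_ext_L[OF \<phi> y] by (simp add: ext_diff_def)
qed

lemma conj_Sdiff:
  assumes p: "p \<in> order_primes" and \<phi>: "fibred \<phi>"
    and h: "h \<in> hom G G" "\<forall>x\<in>carrier G. base \<phi> x = h x" and \<alpha>: "\<alpha> \<in> Sdiff p"
  shows "\<phi> \<otimes>\<^bsub>BG\<^esub> \<alpha> \<otimes>\<^bsub>BG\<^esub> inv\<^bsub>BG\<^esub> \<phi> \<in> Sdiff p"
proof -
  have "\<phi> \<otimes>\<^bsub>BG\<^esub> d \<otimes>\<^bsub>BG\<^esub> inv\<^bsub>BG\<^esub> \<phi> \<in> Sdiff p" if gen: "d \<in> Syl_diffs p" for d
  proof -
    obtain x y where d: "d = ext_diff x y" "x \<in> carrier G" "y \<in> carrier G" "inv x \<otimes> y \<in> Syl p"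
      using gen by (auto simp: Syl_diffs_def)
    interpret h: group_hom G G h using h(1) by (simp add: group_hom_def group_hom_axioms_def is_group)
    have "inv (h x) \<otimes> h y \<in> Syl p" using hom_Syl[OF h(1) p d(4)] d(2,3) by simp
    then show ?thesis using conj_ext_diff[OF \<phi> d(2,3)] d h(2) ext_diff_Sdiff by simp
  qed
  then show ?thesis
    using B.conj_generate[OF fibred_carrier[OF \<phi>]] Syl_diffs_Ext_Inn Ext_Inn_carrier \<alpha>
    unfolding Sdiff_def by blast
qed

lemma ext_L_one_normalizes_Sdiff:
  assumes p: "p \<in> order_primes"
  shows "ext_L \<one> \<in> B.conj_normalizer (Sdiff p)"
proof -
  have "\<forall>x\<in>carrier G. base (inv\<^bsub>BG\<^esub> (ext_L \<one>)) x = finv x"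
    using base_inv_ext_L inv_into_qop[OF invariant_subgroup_carrier] Linv_one by simp
  then have "inv\<^bsub>BG\<^esub> (ext_L \<one>) \<otimes>\<^bsub>BG\<^esub> \<alpha> \<otimes>\<^bsub>BG\<^esub> ext_L \<one> \<in> Sdiff p" if "\<alpha> \<in> Sdiff p" for \<alpha>
    using conj_Sdiff[OF p fibred_inv_ext_L finv.homh _ that] ext_L_carrier by simp
  moreover have "ext_L \<one> \<otimes>\<^bsub>BG\<^esub> \<alpha> \<otimes>\<^bsub>BG\<^esub> inv\<^bsub>BG\<^esub> (ext_L \<one>) \<in> Sdiff p" if "\<alpha> \<in> Sdiff p" for \<alpha>
    using conj_Sdiff[OF p fibred_ext_L f.homh _ that] base_ext_L one_qop by simp
  ultimately show ?thesis using ext_L_carrier by (simp add: B.conj_normalizer_def)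
qed

lemma ext_L_one_fixes:
  assumes \<rho>: "\<rho> \<in> generate BG {ext_L \<one>}" and t: "t \<in> S"
  shows "\<rho> (\<one>, t) = (\<one>, t)"
proof -
  have L: "ext_L \<one> (\<one>, t) = (\<one>, t)" if "t \<in> S" for t
    using ext_L_apply[of \<one> t \<one>] qop_idem[of \<one>] cocycle_idem[of \<one> t] that by simp
  from \<rho> t show ?thesis
  proof (induct \<rho> arbitrary: t rule: generate.induct)
    case one then show ?case using BG_one_apply by simp
  next
    case (incl h) then show ?case using L by simp
  next
    case (inv h) then show ?case using BG_inv_apply[OF ext_L_Bij[of \<one>] _ L] by simp
  next
    case (eng h1 h2)
    have "h1 \<in> carrier BG" "h2 \<in> carrier BG"
      using eng B.generate_in_carrier[of "{ext_L \<one>}"] ext_L_carrier by auto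
    then show ?case using eng BG_mult_apply BG_carrier by simp
  qed
qed

lemma Sdiff_translates_onto:
  assumes q: "q \<in> order_primes" and conn: "quandle_connected (Syl q) (\<triangleright>)" and s: "s \<in> Syl q"
  shows "\<exists>\<beta>\<in>Sdiff q. translates \<beta> s"
proof -
  have one: "\<one> \<in> Syl q" using one_Syl[OF q] .
  obtain g where "g \<in> inn_gen (Syl q) (\<triangleright>)" "g \<one> = s" using conn one s by (auto simp: quandle_connected_def)
  then obtain W where W: "W \<in> generate BG (ext_L ` Syl q)" "base W \<one> = s"
    using lift_inn_gen[OF quandle_qop[OF invariant_subgroup_Syl[OF q]]] Syl_carrier[OF q] one by blast
  have DY: "Sdiff q \<union> {ext_L \<one>} \<subseteq> carrier BG" using Sdiff_carrier ext_L_carrier by blast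
  have "ext_L a \<in> generate BG (Sdiff q \<union> {ext_L \<one>})" if a: "a \<in> Syl q" for a
  proof -
    have ac: "a \<in> carrier G" using Syl_carrier[OF q a] .
    have "ext_diff a \<one> \<in> Sdiff q" using ext_diff_Sdiff ac subgroup.m_inv_closed[OF subgroup_Syl[OF q] a] by simp
    then have "ext_diff a \<one> \<otimes>\<^bsub>BG\<^esub> ext_L \<one> \<in> generate BG (Sdiff q \<union> {ext_L \<one>})"
      by (intro generate.eng generate.incl) auto
    then show ?thesis using ext_diff_mult_ext_L ac by simp
  qed
  then have "W \<in> generate BG (Sdiff q \<union> {ext_L \<one>})"
    using B.generate_subgroup_incl[OF _ B.generate_is_subgroup[OF DY]] W(1) by blast
  then obtain \<beta> \<rho> where \<beta>\<rho>: "\<beta> \<in> Sdiff q" "\<rho> \<in> generate BG {ext_L \<one>}" "W = \<beta> \<otimes>\<^bsub>BG\<^esub> \<rho>"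
    using B.generate_union_normalized_decomp[OF Sdiff_subgroup] ext_L_one_normalizes_Sdiff[OF q] by blast
  obtain c where c: "c \<in> Syl q" "translates \<beta> c" using Sdiff_translates[OF q \<beta>\<rho>(1)] by blast
  have "\<rho> \<in> Ext_Inn"
    using \<beta>\<rho>(2) B.generate_subgroup_incl[OF _ Ext_Inn_subgroup] ext_L_Ext_Inn by blast
  then have "base W \<one> = base \<beta> (base \<rho> \<one>)"
    using base_mult(1)[OF Ext_Inn_fibred Ext_Inn_fibred] \<beta>\<rho> Sdiff_Ext_Inn by blast
  also have "base \<rho> \<one> = \<one>" using ext_L_one_fixes[OF \<beta>\<rho>(2) s0] by (simp add: base_def)
  also have "base \<beta> \<one> = c" using c Syl_carrier[OF q] by (simp add: translates_def)
  finally show ?thesis using W(2) c(2) \<beta>\<rho>(1) by blast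
qed

lemma Syl_prod_translations:
  assumes p: "p \<in> order_primes" and conn: "\<forall>q\<in>order_primes. quandle_connected (Syl q) (\<triangleright>)"
  shows "set qs \<subseteq> order_primes - {p} \<Longrightarrow> h \<in> Syl_prod qs \<Longrightarrow>
     \<exists>\<beta>\<in>Ext_Inn. translates \<beta> h \<and> (\<forall>\<alpha>\<in>Sdiff p. \<alpha> \<otimes>\<^bsub>BG\<^esub> \<beta> = \<beta> \<otimes>\<^bsub>BG\<^esub> \<alpha>)"
proof (induct qs arbitrary: h)
  case Nil
  then have "h = \<one>" by simp
  moreover have "translates \<one>\<^bsub>BG\<^esub> \<one>" using base_one by (simp add: translates_def)
  ultimately show ?case using subgroup.one_closed[OF Ext_Inn_subgroup] Sdiff_carrier by auto
next
  case (Cons q qs)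
  then obtain s h' where sh: "h = s \<otimes> h'" "s \<in> Syl q" "h' \<in> Syl_prod qs" by auto
  have q: "q \<in> order_primes" "q \<noteq> p" using Cons.prems by auto
  obtain \<beta>1 where \<beta>1: "\<beta>1 \<in> Sdiff q" "translates \<beta>1 s" using Sdiff_translates_onto[OF q(1)] conn q sh by blast
  obtain \<beta>2 where \<beta>2: "\<beta>2 \<in> Ext_Inn" "translates \<beta>2 h'" "\<forall>\<alpha>\<in>Sdiff p. \<alpha> \<otimes>\<^bsub>BG\<^esub> \<beta>2 = \<beta>2 \<otimes>\<^bsub>BG\<^esub> \<alpha>"
    using Cons.hyps[OF _ sh(3)] Cons.prems by auto
  have \<beta>1E: "\<beta>1 \<in> Ext_Inn" using \<beta>1 Sdiff_Ext_Inn by blast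
  have c: "s \<in> carrier G" "h' \<in> carrier G" using Syl_carrier[OF q(1) sh(2)] Syl_prod_carrier sh(3) Cons.prems by auto
  have "translates (\<beta>1 \<otimes>\<^bsub>BG\<^esub> \<beta>2) h" using translates_mult[OF \<beta>1E \<beta>2(1) \<beta>1(2) \<beta>2(2) c] sh by simp
  moreover have "\<alpha> \<otimes>\<^bsub>BG\<^esub> (\<beta>1 \<otimes>\<^bsub>BG\<^esub> \<beta>2) = (\<beta>1 \<otimes>\<^bsub>BG\<^esub> \<beta>2) \<otimes>\<^bsub>BG\<^esub> \<alpha>" if \<alpha>: "\<alpha> \<in> Sdiff p" for \<alpha>
  proof -
    have cB: "\<alpha> \<in> carrier BG" "\<beta>1 \<in> carrier BG" "\<beta>2 \<in> carrier BG"
      using \<alpha> \<beta>1E \<beta>2(1) Sdiff_carrier Ext_Inn_carrier by auto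
    have "\<alpha> \<otimes>\<^bsub>BG\<^esub> (\<beta>1 \<otimes>\<^bsub>BG\<^esub> \<beta>2) = \<beta>1 \<otimes>\<^bsub>BG\<^esub> (\<alpha> \<otimes>\<^bsub>BG\<^esub> \<beta>2)"
      using Sdiff_commute[OF p q(1) _ \<alpha> \<beta>1(1)] q(2) cB by (simp add: B.m_assoc [symmetric])
    also have "\<dots> = (\<beta>1 \<otimes>\<^bsub>BG\<^esub> \<beta>2) \<otimes>\<^bsub>BG\<^esub> \<alpha>" using \<beta>2(3) \<alpha> cB by (simp add: B.m_assoc)
    finally show ?thesis .
  qed
  ultimately show ?case using Ext_Inn_mult[OF \<beta>1E \<beta>2(1)] by blast
qed

text \<open>A generator \<open>ext_diff x y\<close> of \<open>Sdiff p\<close> equals its conjugate \<open>ext_diff (h \<otimes> x) (h \<otimes> y)\<close>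
  by a translation by \<open>h\<close> in the complement of \<open>Syl p\<close>, chosen so that \<open>h \<otimes> x\<close> lies in \<open>Syl p\<close>.\<close>
lemma Sdiff_subset_generate_Syl:
  assumes p: "p \<in> order_primes" and conn: "\<forall>q\<in>order_primes. quandle_connected (Syl q) (\<triangleright>)"
  shows "Sdiff p \<subseteq> generate BG (ext_L ` Syl p)"
proof -
  have LS: "ext_L ` Syl p \<subseteq> carrier BG" using ext_L_carrier Syl_carrier[OF p] by blast
  have "d \<in> generate BG (ext_L ` Syl p)" if "d \<in> Syl_diffs p" for d
  proof -
    obtain x y where d: "d = ext_diff x y" "x \<in> carrier G" "y \<in> carrier G" "inv x \<otimes> y \<in> Syl p"
      using \<open>d \<in> Syl_diffs p\<close> by (auto simp: Syl_diffs_def)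
    obtain h where h: "h \<in> Syl_compl p" "h \<otimes> x = proj p x" using Syl_compl_shift_to_proj[OF p d(2)] by blast
    have hc: "h \<in> carrier G" using Syl_compl_carrier[OF h(1)] .
    obtain \<beta> where \<beta>: "\<beta> \<in> Ext_Inn" "translates \<beta> h" "\<forall>\<alpha>\<in>Sdiff p. \<alpha> \<otimes>\<^bsub>BG\<^esub> \<beta> = \<beta> \<otimes>\<^bsub>BG\<^esub> \<alpha>"
      using Syl_prod_translations[OF p conn, of "remove1 p prime_list" h] h set_remove1_prime_list
      by (auto simp: Syl_compl_def)
    have dD: "ext_diff x y \<in> Sdiff p" using ext_diff_Sdiff d(2-4) .
    have "\<beta> \<otimes>\<^bsub>BG\<^esub> ext_diff x y = ext_diff x y \<otimes>\<^bsub>BG\<^esub> \<beta>" using \<beta>(3) dD by simp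
    then have "\<beta> \<otimes>\<^bsub>BG\<^esub> ext_diff x y \<otimes>\<^bsub>BG\<^esub> inv\<^bsub>BG\<^esub> \<beta> = ext_diff x y"
      using Ext_Inn_carrier[OF \<beta>(1)] ext_diff_carrier[OF d(2,3)] by (simp add: B.m_assoc)
    then have e: "ext_diff x y = ext_diff (h \<otimes> x) (h \<otimes> y)"
      using conj_ext_diff[OF Ext_Inn_fibred[OF \<beta>(1)] d(2,3)] \<beta>(2) d by (simp add: translates_def)
    have x': "h \<otimes> x \<in> Syl p" using h(2) proj_in_Syl[OF p d(2)] by simp
    have "h \<otimes> y = (h \<otimes> x) \<otimes> (inv x \<otimes> y)" using hc d by (simp add: m_assoc)
    then have y': "h \<otimes> y \<in> Syl p" using subgroup.m_closed[OF subgroup_Syl[OF p] x' d(4)] by simp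
    have "ext_diff (h \<otimes> x) (h \<otimes> y) \<in> generate BG (ext_L ` Syl p)"
      unfolding ext_diff_def using x' y' by (intro generate.eng generate.incl generate.inv) auto
    then show ?thesis using e d by simp
  qed
  then show ?thesis
    unfolding Sdiff_def using B.generate_subgroup_incl[OF _ B.generate_is_subgroup[OF LS]] by blast
qed

lemma Sdiff_fixes_fibre:
  assumes p: "p \<in> order_primes" and conn: "\<forall>q\<in>order_primes. quandle_connected (Syl q) (\<triangleright>)"
    and triv: "cohomologous_trivial (Syl p) (\<triangleright>) S \<theta>"
    and \<alpha>: "\<alpha> \<in> Sdiff p" "base \<alpha> \<one> = \<one>" and t: "t \<in> S"
  shows "\<alpha> (\<one>, t) = (\<one>, t)"
  using fixes_fibre_if_trivial[OF quandle_qop[OF invariant_subgroup_Syl[OF p]] _ triv _ one_Syl[OF p] \<alpha>(2) t]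
    Sdiff_subset_generate_Syl[OF p conn] \<alpha>(1) Syl_carrier[OF p] by blast

definition "Sdiff_span qs = generate BG (insert (ext_L \<one>) (\<Union>q\<in>set qs. Sdiff q))"

lemma Sdiff_span_generators: "insert (ext_L \<one>) (\<Union>q\<in>set qs. Sdiff q) \<subseteq> Ext_Inn"
  using Sdiff_Ext_Inn ext_L_Ext_Inn by blast

lemma Sdiff_span_Ext_Inn: "Sdiff_span qs \<subseteq> Ext_Inn"
  unfolding Sdiff_span_def using B.generate_subgroup_incl[OF Sdiff_span_generators Ext_Inn_subgroup] .

lemma Sdiff_span_subgroup: "subgroup (Sdiff_span qs) BG"
  unfolding Sdiff_span_def using B.generate_is_subgroup Sdiff_span_generators Ext_Inn_carrier by blast

lemma Sdiff_span_Cons_decomp: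
  assumes p: "p \<in> order_primes" and qs: "set qs \<subseteq> order_primes" "p \<notin> set qs"
    and \<phi>: "\<phi> \<in> Sdiff_span (p # qs)"
  shows "\<exists>\<alpha>\<in>Sdiff p. \<exists>\<psi>\<in>Sdiff_span qs. \<phi> = \<alpha> \<otimes>\<^bsub>BG\<^esub> \<psi>"
proof -
  let ?Y = "insert (ext_L \<one>) (\<Union>q\<in>set qs. Sdiff q)"
  have "y \<in> B.conj_normalizer (Sdiff p)" if y: "y \<in> ?Y" for y
  proof (cases "y = ext_L \<one>")
    case True then show ?thesis using ext_L_one_normalizes_Sdiff[OF p] by simp
  next
    case False
    then obtain q where q: "q \<in> set qs" "y \<in> Sdiff q" using y by auto
    have "y \<otimes>\<^bsub>BG\<^esub> \<alpha> \<otimes>\<^bsub>BG\<^esub> inv\<^bsub>BG\<^esub> y = \<alpha> \<and> inv\<^bsub>BG\<^esub> y \<otimes>\<^bsub>BG\<^esub> \<alpha> \<otimes>\<^bsub>BG\<^esub> y = \<alpha>"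
      if \<alpha>: "\<alpha> \<in> Sdiff p" for \<alpha>
    proof -
      have cm: "\<alpha> \<otimes>\<^bsub>BG\<^esub> y = y \<otimes>\<^bsub>BG\<^esub> \<alpha>" using Sdiff_commute[OF p _ _ \<alpha> q(2)] q(1) qs by auto
      have c: "\<alpha> \<in> carrier BG" "y \<in> carrier BG" using Sdiff_carrier \<alpha> q(2) by auto
      have "y \<otimes>\<^bsub>BG\<^esub> \<alpha> \<otimes>\<^bsub>BG\<^esub> inv\<^bsub>BG\<^esub> y = \<alpha>" using cm [symmetric] c by (simp add: B.m_assoc)
      moreover have "inv\<^bsub>BG\<^esub> y \<otimes>\<^bsub>BG\<^esub> \<alpha> \<otimes>\<^bsub>BG\<^esub> y = \<alpha>" using cm c by (simp add: B.m_assoc)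
      ultimately show ?thesis ..
    qed
    then show ?thesis using Sdiff_carrier q(2) by (simp add: B.conj_normalizer_def)
  qed
  then have norm: "?Y \<subseteq> B.conj_normalizer (Sdiff p)" by blast
  have "Sdiff_span (p # qs) = generate BG (Sdiff p \<union> ?Y)"
    unfolding Sdiff_span_def by (simp add: insert_commute)
  then have "\<phi> \<in> generate BG (Sdiff p \<union> ?Y)" using \<phi> by simp
  then show ?thesis
    using B.generate_union_normalized_decomp[OF Sdiff_subgroup norm] unfolding Sdiff_span_def by blast
qed

lemma proj_base_Sdiff:
  assumes p: "p \<in> order_primes" and q: "q \<in> order_primes" "q \<noteq> p" and \<alpha>: "\<alpha> \<in> Sdiff q"
    and z: "z \<in> carrier G" "proj p z = \<one>"
  shows "proj p (base \<alpha> z) = \<one>"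
proof -
  obtain c where c: "c \<in> Syl q" "translates \<alpha> c" using Sdiff_translates[OF q(1) \<alpha>] by blast
  have "proj p (base \<alpha> z) = proj p c \<otimes> proj p z"
    using c(2) z proj_mult[OF p Syl_carrier[OF q(1) c(1)] z(1)] by (simp add: translates_def)
  then show ?thesis using proj_other_Syl[OF p q c(1)] z(2) by simp
qed

lemma proj_base_Sdiff_span:
  assumes p: "p \<in> order_primes" and qs: "set qs \<subseteq> order_primes" "p \<notin> set qs"
    and \<psi>: "\<psi> \<in> Sdiff_span qs"
  shows "\<forall>z\<in>carrier G. proj p z = \<one> \<longrightarrow> proj p (base \<psi> z) = \<one>"
  using \<psi> unfolding Sdiff_span_def
proof (induct \<psi> rule: generate.induct)
  case one then show ?case using base_one by simp
next
  case (incl h)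
  show ?case
  proof (cases "h = ext_L \<one>")
    case True
    then show ?thesis using hom_proj_commute[OF f.homh] base_ext_L one_qop by simp
  next
    case False
    then obtain q where q: "q \<in> order_primes" "q \<noteq> p" "h \<in> Sdiff q" using incl qs by auto
    then show ?thesis using proj_base_Sdiff[OF p q(1,2,3)] by blast
  qed
next
  case (inv h)
  show ?case
  proof (cases "h = ext_L \<one>")
    case True
    then show ?thesis
      using hom_proj_commute[OF finv.homh] base_inv_ext_L inv_into_qop[OF invariant_subgroup_carrier] Linv_one
      by simp
  next
    case False
    then obtain q where q: "q \<in> order_primes" "q \<noteq> p" "h \<in> Sdiff q" using inv qs by auto
    then show ?thesis using proj_base_Sdiff[OF p q(1,2)] subgroup.m_inv_closed[OF Sdiff_subgroup q(3)] by blast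
  qed
next
  case (eng h1 h2)
  have "h1 \<in> Ext_Inn" "h2 \<in> Ext_Inn"
    using eng(1,3) Sdiff_span_Ext_Inn[of qs] unfolding Sdiff_span_def by auto
  then have f: "fibred h1" "fibred h2" using Ext_Inn_fibred by auto
  show ?case
  proof (intro ballI impI)
    fix z assume z: "z \<in> carrier G" "proj p z = \<one>"
    have "base h2 z \<in> carrier G" "proj p (base h2 z) = \<one>"
      using base_closed[OF fibred_Bij[OF f(2)] z(1)] eng(4) z by auto
    then show "proj p (base (h1 \<otimes>\<^bsub>BG\<^esub> h2) z) = \<one>" using eng(2) base_mult(1)[OF f z(1)] by simp
  qed
qed

lemma Sdiff_span_fixes_fibre:
  assumes conn: "\<forall>q\<in>order_primes. quandle_connected (Syl q) (\<triangleright>)"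
    and triv: "\<forall>q\<in>order_primes. cohomologous_trivial (Syl q) (\<triangleright>) S \<theta>"
  shows "distinct qs \<Longrightarrow> set qs \<subseteq> order_primes \<Longrightarrow> \<phi> \<in> Sdiff_span qs \<Longrightarrow> base \<phi> \<one> = \<one> \<Longrightarrow>
    t \<in> S \<Longrightarrow> \<phi> (\<one>, t) = (\<one>, t)"
proof (induct qs arbitrary: \<phi>)
  case Nil
  then show ?case using ext_L_one_fixes by (simp add: Sdiff_span_def)
next
  case (Cons p qs)
  have p: "p \<in> order_primes" and qs: "p \<notin> set qs" "set qs \<subseteq> order_primes" "distinct qs"
    using Cons.prems by auto
  obtain \<alpha> \<psi> where \<alpha>\<psi>: "\<alpha> \<in> Sdiff p" "\<psi> \<in> Sdiff_span qs" "\<phi> = \<alpha> \<otimes>\<^bsub>BG\<^esub> \<psi>"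
    using Sdiff_span_Cons_decomp[OF p qs(2,1) Cons.prems(3)] by blast
  obtain c where c: "c \<in> Syl p" "translates \<alpha> c" using Sdiff_translates[OF p \<alpha>\<psi>(1)] by blast
  have f: "fibred \<alpha>" "fibred \<psi>" using \<alpha>\<psi>(1,2) Sdiff_Ext_Inn Sdiff_span_Ext_Inn Ext_Inn_fibred by blast+
  define w where "w = base \<psi> \<one>"
  have w: "w \<in> carrier G" "proj p w = \<one>"
    using base_closed[OF fibred_Bij[OF f(2)]] proj_base_Sdiff_span[OF p qs(2,1) \<alpha>\<psi>(2)] proj_one
    by (auto simp: w_def)
  \<comment> \<open>\<open>c \<otimes> w = \<one>\<close> with \<open>c \<in> Syl p\<close> and \<open>proj p w = \<one>\<close> forces \<open>c = w = \<one>\<close>\<close>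
  have cw: "c \<otimes> w = \<one>"
    using Cons.prems(4) \<alpha>\<psi>(3) base_mult(1)[OF f] c(2) w(1) by (simp add: translates_def w_def)
  then have "w \<in> Syl p"
    using Syl_carrier[OF p c(1)] w(1) subgroup.m_inv_closed[OF subgroup_Syl[OF p] c(1)]
    by (metis inv_equality inv_inv inv_closed)
  then have w1: "w = \<one>" using proj_Syl[OF p] w(2) by simp
  then have "\<psi> (\<one>, t) = (\<one>, t)" using Cons.hyps[OF qs(3,2) \<alpha>\<psi>(2)] Cons.prems(5) by (simp add: w_def)
  moreover have "\<alpha> (\<one>, t) = (\<one>, t)"
    using Sdiff_fixes_fibre[OF p conn _ \<alpha>\<psi>(1)] triv p cw w1 c(2) Cons.prems(5) by (simp add: translates_def)
  moreover have "\<phi> (\<one>, t) = \<alpha> (\<psi> (\<one>, t))"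
    using \<alpha>\<psi>(3) BG_mult_apply fibred_Bij f Cons.prems(5) by simp
  ultimately show ?case by simp
qed

lemma ext_diff_one_Sdiff_span: "set qs \<subseteq> order_primes \<Longrightarrow> h \<in> Syl_prod qs \<Longrightarrow> ext_diff h \<one> \<in> Sdiff_span qs"
proof (induct qs arbitrary: h)
  case Nil
  then have "ext_diff h \<one> = \<one>\<^bsub>BG\<^esub>" using ext_L_carrier by (simp add: ext_diff_def)
  then show ?case by (simp add: Sdiff_span_def generate.one)
next
  case (Cons q qs)
  then obtain s h' where sh: "h = s \<otimes> h'" "s \<in> Syl q" "h' \<in> Syl_prod qs" by auto
  have q: "q \<in> order_primes" using Cons.prems by simp
  have c: "s \<in> carrier G" "h' \<in> carrier G" using Syl_carrier[OF q sh(2)] Syl_prod_carrier sh(3) Cons.prems by auto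
  have "inv h' \<otimes> inv s \<otimes> h' \<in> Syl q"
    using normal.inv_op_closed1[OF Syl_normal[OF q] c(2) subgroup.m_inv_closed[OF subgroup_Syl[OF q] sh(2)]] .
  moreover have "inv h \<otimes> h' = inv h' \<otimes> inv s \<otimes> h'" using sh c by (simp add: inv_mult_group)
  ultimately have "ext_diff h h' \<in> Sdiff q" using ext_diff_Sdiff sh c by simp
  then have d1: "ext_diff h h' \<in> Sdiff_span (q # qs)" unfolding Sdiff_span_def by (intro generate.incl) auto
  have "Sdiff_span qs \<subseteq> Sdiff_span (q # qs)" unfolding Sdiff_span_def by (intro B.mono_generate) auto
  then have d2: "ext_diff h' \<one> \<in> Sdiff_span (q # qs)" using Cons sh by auto
  have "ext_diff h \<one> = ext_diff h h' \<otimes>\<^bsub>BG\<^esub> ext_diff h' \<one>" using ext_diff_trans sh c by simp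
  then show ?case using subgroup.m_closed[OF Sdiff_span_subgroup d1 d2] by simp
qed

lemma Ext_Inn_subset_Sdiff_span: "Ext_Inn \<subseteq> Sdiff_span prime_list"
proof -
  have "ext_L x \<in> Sdiff_span prime_list" if x: "x \<in> carrier G" for x
  proof -
    have "ext_diff x \<one> \<in> Sdiff_span prime_list"
      using ext_diff_one_Sdiff_span carrier_subset_Syl_prod set_prime_list x by blast
    moreover have "ext_L \<one> \<in> Sdiff_span prime_list" unfolding Sdiff_span_def by (intro generate.incl) simp
    ultimately show ?thesis using subgroup.m_closed[OF Sdiff_span_subgroup] ext_diff_mult_ext_L x by fastforce
  qed
  then show ?thesis unfolding Ext_Inn_def using B.generate_subgroup_incl[OF _ Sdiff_span_subgroup] by blast
qed

lemma cohomologous_trivial_if_Syl: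
  assumes conn: "quandle_connected (carrier G) (\<triangleright>)"
    and conn_Syl: "\<forall>q\<in>order_primes. quandle_connected (Syl q) (\<triangleright>)"
    and triv: "\<forall>q\<in>order_primes. cohomologous_trivial (Syl q) (\<triangleright>) S \<theta>"
  shows "cohomologous_trivial (carrier G) (\<triangleright>) S \<theta>"
  using cohomologous_trivial_if_connected[OF one_closed _ conn]
    Sdiff_span_fixes_fibre[OF conn_Syl triv distinct_prime_list] set_prime_list Ext_Inn_subset_Sdiff_span
  by blast

end

context nilpotent_group_aut
begin

lemma simply_connected_if_Syl:
  assumes sc: "\<forall>p\<in>order_primes. simply_connected (Syl p) (\<triangleright>) TYPE('s)"
    and conn: "quandle_connected (carrier G) (\<triangleright>)"
  shows "simply_connected (carrier G) (\<triangleright>) TYPE('s)"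
  unfolding simply_connected_def
proof (intro conjI allI impI)
  fix S :: "'s set" and \<theta> assume c: "quandle_cocycle (carrier G) (\<triangleright>) S \<theta>"
  show "cohomologous_trivial (carrier G) (\<triangleright>) S \<theta>"
  proof (cases "S = {}")
    case True then show ?thesis by (simp add: cohomologous_trivial_def bij_betw_def)
  next
    case False
    then obtain s0 where s0: "s0 \<in> S" by blast
    interpret E: nilpotent_qop_extension G f S \<theta> s0
      by unfold_locales (use c s0 quandle_qop[OF invariant_subgroup_carrier] in auto)
    show ?thesis
      using E.cohomologous_trivial_if_Syl[OF conn] sc quandle_cocycle_subset[OF c] Syl_carrier
      by (simp add: simply_connected_def subset_iff)
  qed
qed (rule conn)

lemma all_sylow_subgroups_iff:
  "(\<forall>(p::nat) P. Factorial_Ring.prime p \<and> p dvd order G \<and> sylow_subgroup G p P \<longrightarrow> R P) \<longleftrightarrow>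
    (\<forall>p\<in>order_primes. R (Syl p))"
proof -
  have primes: "p \<in> order_primes \<longleftrightarrow> Factorial_Ring.prime p \<and> p dvd order G" for p
    using order_nonzero by (auto simp: in_prime_factors_iff)
  show ?thesis
  proof
    assume "\<forall>(p::nat) P. Factorial_Ring.prime p \<and> p dvd order G \<and> sylow_subgroup G p P \<longrightarrow> R P"
    then show "\<forall>p\<in>order_primes. R (Syl p)" using sylow_subgroup_Syl primes by blast
  next
    assume "\<forall>p\<in>order_primes. R (Syl p)"
    then show "\<forall>(p::nat) P. Factorial_Ring.prime p \<and> p dvd order G \<and> sylow_subgroup G p P \<longrightarrow> R P"
      using sylow_subgroup_unique primes by blast
  qed
qed

end

theorem theorem3p13:
  fixes G :: "('a, 'b) monoid_scheme" and f :: "'a \<Rightarrow> 'a"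
  assumes "group G" and "finite (carrier G)" and "nilpotent_group G"
    and "f \<in> iso G G"
    and "quandle_connected (carrier G) (qop G f)"
  shows "simply_connected (carrier G) (qop G f) TYPE('s) \<longleftrightarrow>
    (\<forall>(p::nat) P. Factorial_Ring.prime p \<and> p dvd order G \<and> sylow_subgroup G p P \<longrightarrow>
       simply_connected P (qop G f) TYPE('s))"
proof -
  have "nilpotent_group_aut G f"
    using assms by (simp add: nilpotent_group_aut_def finite_nilpotent_group_def group_aut_def
        finite_nilpotent_group_axioms_def group_aut_axioms_def nilpotent_group_def)
  then interpret nilpotent_group_aut G f .
  show ?thesis
    unfolding all_sylow_subgroups_iff
    using simply_connected_Syl simply_connected_if_Syl assms(5) by blast
qed

end
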